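(* Let $\mathcal{G}$ be a class of graphs and $r\ge 2$ an integer. Then $\mathcal{G}$ is fractionally-$\mathrm{tw}$-fragile if and only if $\mathcal{A}_{\mathcal{G}}^{(r)}$ is $\mathrm{tw}$-pliable.
   Context: A $\sigma$-structure $\mathbb{A}$ ($\sigma$ a finite set of symbols with arities) is a finite domain $A$ with functions $f^{\mathbb{A}}\colon A^{\mathrm{ar}(f)}\to\mathbb{Q}_{\ge0}$. For a map $h\colon A\to B$, $\mathrm{val}(h)=\sum_{f\in\sigma}\sum_{\bar x\in A^{\mathrm{ar}(f)}}f^{\mathbb{A}}(\bar x)f^{\mathbb{B}}(h(\bar x))$, $\mathrm{opt}(\mathbb{A},\mathbb{B})=\max_h\mathrm{val}(h)$ over all maps, and $d_{\mathrm{opt}}(\mathbb{A},\mathbb{B})=\sup_{\mathbb{C}}|\ln\mathrm{opt}(\mathbb{A},\mathbb{C})-\ln\mathrm{opt}(\mathbb{B},\mathbb{C})|$ over all $\sigma$-structures $\mathbb{C}$ ($\ln0=-\infty$, $|\ln0-\ln0|=0$). The Gaifman graph of $\mathbb{A}$ has vertex set $A$, distinct $u,v$ adjacent iff both occur in some tuple $\bar x$ with $f^{\mathbb{A}}(\bar x)>0$; $\mathrm{tw}(\mathbb{A})$ is its treewidth. A class $\mathcal{A}$ is $\mathrm{tw}$-pliable if for every $\varepsilon>0$ there is $k$ such that every $\mathbb{A}\in\mathcal{A}$ (signature $\sigma$) has a $\sigma$-structure $\mathbb{B}$ with $\mathrm{tw}(\mathbb{B})\le k$ and $d_{\mathrm{opt}}(\mathbb{A},\mathbb{B})\le\varepsilon$.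 $\mathcal{A}_{\mathcal{G}}^{(r)}$ is the class of all structures (any signature) whose Gaifman graph lies in $\mathcal{G}$ and whose symbols all have arity at most $r$. A distribution $\pi$ over subsets of $V$ is $\varepsilon$-thin if $\Pr_{X\sim\pi}[v\in X]\le\varepsilon$ for every $v\in V$. $\mathcal{G}$ is fractionally-$\mathrm{tw}$-fragile if for every $\varepsilon>0$ there is $k$ such that every $G\in\mathcal{G}$ has an $\varepsilon$-thin distribution over sets $X\subseteq V(G)$ with $\mathrm{tw}(G-X)\le k$. *)

theory Defs
  imports "HOL-Probability.Probability"
begin

type_synonym graph = "nat set \<times> (nat \<times> nat) set"

definition is_graph :: "graph \<Rightarrow> bool" where
  "is_graph G \<longleftrightarrow> finite (fst G) \<and> snd G \<subseteq> fst G \<times> fst G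
     \<and> (\<forall>u v. (u, v) \<in> snd G \<longrightarrow> (v, u) \<in> snd G) \<and> (\<forall>u. (u, u) \<notin> snd G)"

definition graph_iso :: "graph \<Rightarrow> graph \<Rightarrow> bool" where
  "graph_iso G H \<longleftrightarrow> (\<exists>g. bij_betw g (fst G) (fst H) \<and>
     (\<forall>u\<in>fst G. \<forall>v\<in>fst G. (u, v) \<in> snd G \<longleftrightarrow> (g u, g v) \<in> snd H))"

text \<open>A (finite) tree: nonempty finite node set, symmetric irreflexive edge relation,
connected, with exactly |N|-1 undirected edges.\<close>
definition is_tree :: "nat set \<Rightarrow> (nat \<times> nat) set \<Rightarrow> bool" where
  "is_tree N F \<longleftrightarrow> finite N \<and> N \<noteq> {} \<and> F \<subseteq> N \<times> N
     \<and> (\<forall>a b. (a, b) \<in> F \<longrightarrow> (b, a) \<in> F) \<and> (\<forall>a. (a, a) \<notin> F)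
     \<and> (\<forall>s\<in>N. \<forall>t\<in>N. (s, t) \<in> F\<^sup>*)
     \<and> card F = 2 * (card N - 1)"

definition tree_decomp :: "graph \<Rightarrow> nat set \<Rightarrow> (nat \<times> nat) set \<Rightarrow> (nat \<Rightarrow> nat set) \<Rightarrow> bool" where
  "tree_decomp G N F \<beta> \<longleftrightarrow> is_tree N F
     \<and> (\<forall>t\<in>N. \<beta> t \<subseteq> fst G)
     \<and> (\<forall>v\<in>fst G. \<exists>t\<in>N. v \<in> \<beta> t)
     \<and> (\<forall>u v. (u, v) \<in> snd G \<longrightarrow> (\<exists>t\<in>N. u \<in> \<beta> t \<and> v \<in> \<beta> t))
     \<and> (\<forall>v\<in>fst G. \<forall>s\<in>N. \<forall>t\<in>N. v \<in> \<beta> s \<longrightarrow> v \<in> \<beta> t \<longrightarrow>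
           (s, t) \<in> (F \<inter> ({x. v \<in> \<beta> x} \<times> {x. v \<in> \<beta> x}))\<^sup>*)"

definition treewidth :: "graph \<Rightarrow> nat" where
  "treewidth G = (LEAST k. \<exists>N F \<beta>. tree_decomp G N F \<beta> \<and> (\<forall>t\<in>N. card (\<beta> t) \<le> k + 1))"

definition del_verts :: "graph \<Rightarrow> nat set \<Rightarrow> graph" where
  "del_verts G X = (fst G - X, snd G \<inter> ((fst G - X) \<times> (fst G - X)))"

definition frac_tw_fragile :: "graph set \<Rightarrow> bool" where
  "frac_tw_fragile \<G> \<longleftrightarrow> (\<forall>\<epsilon>::real. \<epsilon> > 0 \<longrightarrow> (\<exists>k::nat. \<forall>G\<in>\<G>. \<exists>\<pi> :: nat set pmf.
      set_pmf \<pi> \<subseteq> {X. X \<subseteq> fst G \<and> treewidth (del_verts G X) \<le> k}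
    \<and> (\<forall>v\<in>fst G. measure_pmf.prob \<pi> {X. v \<in> X} \<le> \<epsilon>)))"

type_synonym signature = "nat set \<times> (nat \<Rightarrow> nat)"
type_synonym vstruct = "nat set \<times> (nat \<Rightarrow> nat list \<Rightarrow> real)"

definition tuples :: "nat set \<Rightarrow> nat \<Rightarrow> nat list set" where
  "tuples A n = {xs. length xs = n \<and> set xs \<subseteq> A}"

definition is_sig :: "signature \<Rightarrow> bool" where
  "is_sig \<sigma> \<longleftrightarrow> finite (fst \<sigma>)"

definition is_struct :: "signature \<Rightarrow> vstruct \<Rightarrow> bool" where
  "is_struct \<sigma> \<A> \<longleftrightarrow> finite (fst \<A>) \<and> fst \<A> \<noteq> {}
     \<and> (\<forall>f xs. snd \<A> f xs \<in> \<rat> \<and> snd \<A> f xs \<ge> 0)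
     \<and> (\<forall>f xs. snd \<A> f xs \<noteq> 0 \<longrightarrow> f \<in> fst \<sigma> \<and> xs \<in> tuples (fst \<A>) (snd \<sigma> f))"

definition sval :: "signature \<Rightarrow> vstruct \<Rightarrow> vstruct \<Rightarrow> (nat \<Rightarrow> nat) \<Rightarrow> real" where
  "sval \<sigma> \<A> \<B> h = (\<Sum>f\<in>fst \<sigma>. \<Sum>xs\<in>tuples (fst \<A>) (snd \<sigma> f).
       snd \<A> f xs * snd \<B> f (map h xs))"

definition sopt :: "signature \<Rightarrow> vstruct \<Rightarrow> vstruct \<Rightarrow> real" where
  "sopt \<sigma> \<A> \<B> = Max {sval \<sigma> \<A> \<B> h | h. \<forall>x\<in>fst \<A>. h x \<in> fst \<B>}"

definition lnE :: "real \<Rightarrow> ereal" where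
  "lnE x = (if x = 0 then - \<infinity> else ereal (ln x))"

definition logdiff :: "real \<Rightarrow> real \<Rightarrow> ereal" where
  "logdiff a b = (if a = 0 \<and> b = 0 then 0 else \<bar>lnE a - lnE b\<bar>)"

definition d_opt :: "signature \<Rightarrow> vstruct \<Rightarrow> vstruct \<Rightarrow> ereal" where
  "d_opt \<sigma> \<A> \<B> = (SUP \<C>\<in>{\<C>. is_struct \<sigma> \<C>}. logdiff (sopt \<sigma> \<A> \<C>) (sopt \<sigma> \<B> \<C>))"

definition gaifman :: "vstruct \<Rightarrow> graph" where
  "gaifman \<A> = (fst \<A>, {(u, v). u \<noteq> v \<and> (\<exists>f xs. snd \<A> f xs > 0 \<and> u \<in> set xs \<and> v \<in> set xs)})"

definition A_class :: "graph set \<Rightarrow> nat \<Rightarrow> (signature \<times> vstruct) set" where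
  "A_class \<G> r = {(\<sigma>, \<A>). is_sig \<sigma> \<and> is_struct \<sigma> \<A>
      \<and> (\<exists>G\<in>\<G>. graph_iso (gaifman \<A>) G) \<and> (\<forall>f\<in>fst \<sigma>. snd \<sigma> f \<le> r)}"

definition tw_pliable :: "(signature \<times> vstruct) set \<Rightarrow> bool" where
  "tw_pliable \<AA> \<longleftrightarrow> (\<forall>\<epsilon>::real. \<epsilon> > 0 \<longrightarrow> (\<exists>k::nat. \<forall>(\<sigma>, \<A>)\<in>\<AA>.
      \<exists>\<B>. is_struct \<sigma> \<B> \<and> treewidth (gaifman \<B>) \<le> k \<and> d_opt \<sigma> \<A> \<B> \<le> ereal \<epsilon>))"

end

theory Submission
  imports Defs
begin

text \<open>
  Fragility implies pliability: given a thin distribution of deletion sets X with small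
  tw (G - X), replace A by a disjoint union of copies of A, one per set X in the support and
  weighted by (a rational approximation of) its probability, where the copy for X loses every
  tuple meeting X. Every copy has small treewidth. An assignment of the union is dominated by
  one of A; conversely, copying an optimal assignment of A loses, by a union bound over the at
  most r elements of a tuple, only a fraction of r times the thinness of its value.

  Pliability implies fragility: encode a weighting w of the vertices of G as the structure A_w
  with unary weights w v and binary weights min (w u) (w v) on the edges. If d_opt (A_w, B) is
  small, there are maps g from A_w to B and h back whose round trip h \<circ> g preserves most of
  the weight. Deleting the vertices moved by h \<circ> g and a lighter endpoint of every edge that
  is not preserved leaves a subgraph of G embedding into the Gaifman graph of B. Since graphs
  of bounded treewidth are sparse, a coarse approximation of A_w already bounds the total edge
  weight by O(k) times the vertex weight, so the deleted set is light. Multiplicative weights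
  turn light deletion sets for all weightings into a thin distribution.
\<close>

section \<open>Optimal values and the distance d_opt\<close>

lemma sval_cong:
  assumes "\<forall>x\<in>fst A. h x = h' x"
  shows "sval \<sigma> A B h = sval \<sigma> A B h'"
proof -
  have "\<And>f xs. xs \<in> tuples (fst A) (snd \<sigma> f) \<Longrightarrow> map h xs = map h' xs"
    using assms unfolding tuples_def by (auto intro: map_cong)
  then show ?thesis unfolding sval_def by (intro sum.cong refl) (simp only:)
qed

lemma finite_sval_range:
  assumes "finite (fst A)" "finite (fst C)"
  shows "finite {sval \<sigma> A C h | h. \<forall>x\<in>fst A. h x \<in> fst C}"
proof -
  have "{sval \<sigma> A C h | h. \<forall>x\<in>fst A. h x \<in> fst C} \<subseteq> sval \<sigma> A C ` (fst A \<rightarrow>\<^sub>E fst C)"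
  proof
    fix y assume "y \<in> {sval \<sigma> A C h | h. \<forall>x\<in>fst A. h x \<in> fst C}"
    then obtain h where h: "\<forall>x\<in>fst A. h x \<in> fst C" "y = sval \<sigma> A C h" by auto
    then have "restrict h (fst A) \<in> fst A \<rightarrow>\<^sub>E fst C" "sval \<sigma> A C (restrict h (fst A)) = y"
      by (auto intro: sval_cong)
    then show "y \<in> sval \<sigma> A C ` (fst A \<rightarrow>\<^sub>E fst C)" by force
  qed
  then show ?thesis using assms by (meson finite_PiE finite_imageI finite_subset)
qed

lemma sval_le_sopt:
  assumes "finite (fst A)" "finite (fst C)" "\<forall>x\<in>fst A. h x \<in> fst C"
  shows "sval \<sigma> A C h \<le> sopt \<sigma> A C"
  unfolding sopt_def using assms finite_sval_range by (intro Max_ge) auto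

lemma sopt_attained:
  assumes "finite (fst A)" "finite (fst C)" "fst C \<noteq> {}"
  obtains h where "\<forall>x\<in>fst A. h x \<in> fst C" "sopt \<sigma> A C = sval \<sigma> A C h"
proof -
  have "{sval \<sigma> A C h | h. \<forall>x\<in>fst A. h x \<in> fst C} \<noteq> {}" using assms(3) by auto
  then have "sopt \<sigma> A C \<in> {sval \<sigma> A C h | h. \<forall>x\<in>fst A. h x \<in> fst C}"
    unfolding sopt_def using Max_in finite_sval_range[OF assms(1,2)] by blast
  then show ?thesis using that by auto
qed

lemma sval_nonneg:
  assumes "is_struct \<sigma> A" "is_struct \<sigma> C"
  shows "sval \<sigma> A C h \<ge> 0"
  using assms unfolding sval_def is_struct_def by (intro sum_nonneg mult_nonneg_nonneg) auto

lemma sopt_nonneg: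
  assumes "is_struct \<sigma> A" "is_struct \<sigma> C"
  shows "sopt \<sigma> A C \<ge> 0"
proof -
  have "finite (fst A)" "finite (fst C)" "fst C \<noteq> {}" using assms unfolding is_struct_def by auto
  then obtain h where "sopt \<sigma> A C = sval \<sigma> A C h" by (rule sopt_attained)
  then show ?thesis using sval_nonneg assms by simp
qed

lemma logdiff_commute: "logdiff a b = logdiff b a"
  unfolding logdiff_def lnE_def by (auto simp: abs_minus_commute)

lemma d_opt_commute: "d_opt \<sigma> A B = d_opt \<sigma> B A"
  unfolding d_opt_def by (simp add: logdiff_commute)

lemma logdiff_le_imp_ge_exp:
  assumes "logdiff a b \<le> ereal \<epsilon>" "a > 0" "b \<ge> 0"
  shows "b \<ge> exp (-\<epsilon>) * a"
proof -
  have "b \<noteq> 0"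
  proof
    assume "b = 0"
    then have "logdiff a b = \<infinity>" using assms(2) unfolding logdiff_def lnE_def by simp
    then show False using assms(1) by simp
  qed
  then have b: "b > 0" using assms(3) by simp
  then have "\<bar>ln a - ln b\<bar> \<le> \<epsilon>" using assms(1,2) unfolding logdiff_def lnE_def by simp
  then have "exp (ln a - \<epsilon>) \<le> b" using b by (metis exp_le_cancel_iff exp_ln abs_le_D1 diff_le_eq add.commute)
  then show ?thesis using assms(2) by (simp add: exp_diff exp_minus field_simps)
qed

lemma sopt_ge_if_d_opt_le:
  assumes "is_struct \<sigma> A" "is_struct \<sigma> B" "is_struct \<sigma> C" "d_opt \<sigma> A B \<le> ereal \<epsilon>"
    and "sopt \<sigma> A C > 0"
  shows "sopt \<sigma> B C \<ge> exp (-\<epsilon>) * sopt \<sigma> A C"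
proof (rule logdiff_le_imp_ge_exp)
  have "logdiff (sopt \<sigma> A C) (sopt \<sigma> B C) \<le> d_opt \<sigma> A B"
    unfolding d_opt_def using assms(3) by (intro SUP_upper) auto
  then show "logdiff (sopt \<sigma> A C) (sopt \<sigma> B C) \<le> ereal \<epsilon>" using assms(4) by simp
qed (use assms sopt_nonneg in auto)

lemma d_opt_le_if_sopt_sandwiched:
  assumes "0 \<le> \<rho>" "\<rho> < 1"
    and "\<And>C. is_struct \<sigma> C \<Longrightarrow> 0 \<le> sopt \<sigma> B C"
    and "\<And>C. is_struct \<sigma> C \<Longrightarrow> sopt \<sigma> B C \<le> sopt \<sigma> A C"
    and "\<And>C. is_struct \<sigma> C \<Longrightarrow> (1 - \<rho>) * sopt \<sigma> A C \<le> sopt \<sigma> B C"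
  shows "d_opt \<sigma> A B \<le> ereal (- ln (1 - \<rho>))"
  unfolding d_opt_def
proof (rule SUP_least)
  fix C assume "C \<in> {C. is_struct \<sigma> C}"
  then have ab: "0 \<le> sopt \<sigma> B C" "sopt \<sigma> B C \<le> sopt \<sigma> A C" "(1 - \<rho>) * sopt \<sigma> A C \<le> sopt \<sigma> B C"
    using assms(3-5) by auto
  show "logdiff (sopt \<sigma> A C) (sopt \<sigma> B C) \<le> ereal (- ln (1 - \<rho>))"
  proof (cases "sopt \<sigma> B C = 0")
    case True
    then have "sopt \<sigma> A C = 0" using ab assms(1,2) by (smt (verit) mult_pos_pos)
    then show ?thesis using True assms(1,2) unfolding logdiff_def by simp
  next
    case False
    then have pos: "sopt \<sigma> B C > 0" "sopt \<sigma> A C > 0" using ab by auto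
    have "ln ((1 - \<rho>) * sopt \<sigma> A C) \<le> ln (sopt \<sigma> B C)"
      using ab pos assms(1,2) by (subst ln_le_cancel_iff) auto
    then have "ln (sopt \<sigma> A C) - ln (sopt \<sigma> B C) \<le> - ln (1 - \<rho>)"
      using pos assms(2) by (simp add: ln_mult)
    moreover have "ln (sopt \<sigma> B C) \<le> ln (sopt \<sigma> A C)" using ab pos by simp
    ultimately show ?thesis using pos unfolding logdiff_def lnE_def by simp
  qed
qed

section \<open>Tree decompositions\<close>

definition finite_graph :: "graph \<Rightarrow> bool" where
  "finite_graph K \<longleftrightarrow> finite (fst K) \<and> snd K \<subseteq> fst K \<times> fst K"

definition induced :: "graph \<Rightarrow> nat set \<Rightarrow> graph" where
  "induced K S = (S, snd K \<inter> (S \<times> S))"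

lemma is_graph_imp_finite_graph: "is_graph G \<Longrightarrow> finite_graph G"
  unfolding finite_graph_def is_graph_def by auto

lemma finite_graph_del_verts: "finite_graph G \<Longrightarrow> finite_graph (del_verts G X)"
  unfolding finite_graph_def del_verts_def by auto

lemma finite_graph_induced: "finite_graph K \<Longrightarrow> S \<subseteq> fst K \<Longrightarrow> finite_graph (induced K S)"
  unfolding finite_graph_def induced_def by (auto intro: finite_subset)

lemma induced_induced: "S \<subseteq> T \<Longrightarrow> induced (induced K T) S = induced K S"
  unfolding induced_def by auto

lemma finite_graph_finite_edges: "finite_graph K \<Longrightarrow> finite (snd K)"
  unfolding finite_graph_def by (meson finite_SigmaI finite_subset)

lemma finite_graph_gaifman:
  assumes "is_struct \<sigma> A" shows "finite_graph (gaifman A)"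
proof -
  have sup: "set xs \<subseteq> fst A" if "snd A f xs > 0" for f xs
  proof -
    have "snd A f xs \<noteq> 0" using that by simp
    then show ?thesis using assms unfolding is_struct_def tuples_def by blast
  qed
  show ?thesis using assms sup unfolding finite_graph_def gaifman_def is_struct_def by auto
qed

lemma gaifman_sym: "(u, v) \<in> snd (gaifman B) \<Longrightarrow> (v, u) \<in> snd (gaifman B)"
  unfolding gaifman_def by auto

lemma is_tree_singleton: "is_tree {n} {}"
  unfolding is_tree_def by auto

lemma tree_decomp_single_bag: "finite_graph K \<Longrightarrow> tree_decomp K {0} {} (\<lambda>_. fst K)"
  unfolding tree_decomp_def finite_graph_def by (auto simp: is_tree_singleton)

lemma treewidth_le_iff:
  assumes "finite_graph K"
  shows "treewidth K \<le> k \<longleftrightarrow> (\<exists>N F \<beta>. tree_decomp K N F \<beta> \<and> (\<forall>t\<in>N. card (\<beta> t) \<le> k + 1))"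
    (is "_ \<longleftrightarrow> ?D k")
proof
  have "?D (card (fst K))" using tree_decomp_single_bag[OF assms] by fastforce
  then have "?D (treewidth K)" unfolding treewidth_def by (rule LeastI)
  then show "?D k" if "treewidth K \<le> k" using that by (meson add_le_mono1 order_trans)
next
  show "?D k \<Longrightarrow> treewidth K \<le> k" unfolding treewidth_def by (rule Least_le)
qed

lemma treewidth_le_card:
  assumes "finite_graph K" "card (fst K) \<le> k + 1"
  shows "treewidth K \<le> k"
  using tree_decomp_single_bag[OF assms(1)] assms by (subst treewidth_le_iff) fastforce+

lemma tree_decomp_pullback:
  assumes "finite_graph H" "finite (fst K)" "inj_on g (fst H)" "g ` fst H \<subseteq> fst K"
    and "\<And>u v. (u, v) \<in> snd H \<Longrightarrow> (g u, g v) \<in> snd K"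
    and td: "tree_decomp K N F \<beta>"
  shows "tree_decomp H N F (\<lambda>t. {z\<in>fst H. g z \<in> \<beta> t})"
    and "t \<in> N \<Longrightarrow> card {z\<in>fst H. g z \<in> \<beta> t} \<le> card (\<beta> t)"
proof -
  note td = td[unfolded tree_decomp_def]
  show "t \<in> N \<Longrightarrow> card {z\<in>fst H. g z \<in> \<beta> t} \<le> card (\<beta> t)"
    using td assms(2) by (intro card_inj_on_le[of g] inj_on_subset[OF assms(3)])
      (auto intro: finite_subset)
  have bags: "{x. z \<in> {z\<in>fst H. g z \<in> \<beta> x}} = {x. g z \<in> \<beta> x}" if "z \<in> fst H" for z
    using that by auto
  show "tree_decomp H N F (\<lambda>t. {z\<in>fst H. g z \<in> \<beta> t})"
    unfolding tree_decomp_def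
  proof (intro conjI ballI allI impI)
    show "\<exists>t\<in>N. u \<in> {z \<in> fst H. g z \<in> \<beta> t} \<and> v \<in> {z \<in> fst H. g z \<in> \<beta> t}"
      if uv: "(u, v) \<in> snd H" for u v
      using td assms(5)[OF uv] uv assms(1) unfolding finite_graph_def by blast
    show "\<exists>t\<in>N. v \<in> {z \<in> fst H. g z \<in> \<beta> t}" if "v \<in> fst H" for v
      using td assms(4) that by blast
    show "(s, t) \<in> (F \<inter> {x. v \<in> {z\<in>fst H. g z \<in> \<beta> x}} \<times> {x. v \<in> {z\<in>fst H. g z \<in> \<beta> x}})\<^sup>*"
      if "v \<in> fst H" "s \<in> N" "t \<in> N" "v \<in> {z\<in>fst H. g z \<in> \<beta> s}" "v \<in> {z\<in>fst H. g z \<in> \<beta> t}"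
      for v s t
      using td assms(4) that unfolding bags[OF that(1)] by auto
  qed (use td in auto)
qed

lemma treewidth_le_if_embedding:
  assumes "finite_graph H" "finite_graph K" "inj_on g (fst H)" "g ` fst H \<subseteq> fst K"
    and "\<And>u v. (u, v) \<in> snd H \<Longrightarrow> (g u, g v) \<in> snd K"
  shows "treewidth H \<le> treewidth K"
proof -
  obtain N F \<beta> where d: "tree_decomp K N F \<beta>" "\<forall>t\<in>N. card (\<beta> t) \<le> treewidth K + 1"
    using treewidth_le_iff[OF assms(2)] by blast
  have "finite (fst K)" using assms(2) unfolding finite_graph_def by simp
  note pb = tree_decomp_pullback[OF assms(1) this assms(3-5) d(1)]
  show ?thesis using pb d(2) treewidth_le_iff[OF assms(1)] by (meson order_trans)
qed

lemma rtrancl_map_prod: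
  assumes "(x, y) \<in> R\<^sup>*"
  shows "(f x, f y) \<in> (map_prod f f ` R)\<^sup>*"
  using assms
proof (induction rule: rtrancl_induct)
  case (step y z)
  then have "(f y, f z) \<in> map_prod f f ` R" by force
  then show ?case using step(3) by (meson rtrancl.rtrancl_into_rtrancl)
qed simp

lemma is_tree_image:
  assumes T: "is_tree N F" and e: "inj_on e N"
  shows "is_tree (e ` N) (map_prod e e ` F)"
proof -
  note t = T[unfolded is_tree_def]
  have FN: "F \<subseteq> N \<times> N" using t by simp
  have inj: "inj_on (map_prod e e) F"
    using e FN by (intro inj_on_subset[OF map_prod_inj_on[OF e e]])
  have irr: "(z, z) \<notin> map_prod e e ` F" for z
  proof
    assume "(z, z) \<in> map_prod e e ` F"
    then obtain x y where xy: "(x, y) \<in> F" "e x = e y" by auto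
    then have "x = y" using FN inj_onD[OF e] by blast
    then show False using xy t by simp
  qed
  have conn: "(s, t) \<in> (map_prod e e ` F)\<^sup>*" if st: "s \<in> e ` N" "t \<in> e ` N" for s t
  proof -
    obtain s' t' where "s' \<in> N" "t' \<in> N" "s = e s'" "t = e t'" using st by blast
    then show ?thesis using t rtrancl_map_prod[of s' t' F e] by simp
  qed
  have "card (map_prod e e ` F) = card F" "card (e ` N) = card N"
    using card_image[OF inj] card_image[OF e] by auto
  with t FN irr conn show ?thesis unfolding is_tree_def by auto
qed

lemma tree_decomp_image:
  assumes td: "tree_decomp K N F \<beta>" and e: "inj_on e N"
  shows "tree_decomp K (e ` N) (map_prod e e ` F) (\<beta> \<circ> the_inv_into N e)"
proof -
  let ?\<beta> = "\<beta> \<circ> the_inv_into N e"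
  note t = td[unfolded tree_decomp_def]
  have FN: "F \<subseteq> N \<times> N" using t unfolding is_tree_def by simp
  have inv: "?\<beta> (e t) = \<beta> t" if "t \<in> N" for t
    using the_inv_into_f_f[OF e that] by simp
  have sub: "map_prod e e ` (F \<inter> {x. v \<in> \<beta> x} \<times> {x. v \<in> \<beta> x})
      \<subseteq> map_prod e e ` F \<inter> {x. v \<in> ?\<beta> x} \<times> {x. v \<in> ?\<beta> x}" for v
  proof
    fix p assume "p \<in> map_prod e e ` (F \<inter> {x. v \<in> \<beta> x} \<times> {x. v \<in> \<beta> x})"
    then obtain x y where "p = (e x, e y)" "(x, y) \<in> F" "v \<in> \<beta> x" "v \<in> \<beta> y" by auto
    moreover have "x \<in> N" "y \<in> N" using calculation(2) FN by auto
    ultimately show "p \<in> map_prod e e ` F \<inter> {x. v \<in> ?\<beta> x} \<times> {x. v \<in> ?\<beta> x}"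
      using inv by auto
  qed
  show ?thesis
    unfolding tree_decomp_def
  proof (intro conjI ballI allI impI)
    show "is_tree (e ` N) (map_prod e e ` F)" using t is_tree_image[OF _ e] by blast
    show "?\<beta> t \<subseteq> fst K" if "t \<in> e ` N" for t
      using that t inv by auto
    show "\<exists>t\<in>e ` N. v \<in> ?\<beta> t" if v: "v \<in> fst K" for v
    proof -
      obtain t where "t \<in> N" "v \<in> \<beta> t" using v t by blast
      then show ?thesis using inv by force
    qed
    show "\<exists>t\<in>e ` N. u \<in> ?\<beta> t \<and> v \<in> ?\<beta> t" if uv: "(u, v) \<in> snd K" for u v
    proof -
      obtain t where "t \<in> N" "u \<in> \<beta> t" "v \<in> \<beta> t" using uv t by blast
      then show ?thesis using inv by force
    qed
    show "(s, t) \<in> (map_prod e e ` F \<inter> {x. v \<in> ?\<beta> x} \<times> {x. v \<in> ?\<beta> x})\<^sup>*"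
      if v: "v \<in> fst K" "s \<in> e ` N" "t \<in> e ` N" "v \<in> ?\<beta> s" "v \<in> ?\<beta> t" for v s t
    proof -
      obtain s' t' where st: "s' \<in> N" "t' \<in> N" "s = e s'" "t = e t'" using v(2,3) by blast
      then have "v \<in> \<beta> s'" "v \<in> \<beta> t'" using v(4,5) inv by auto
      then have "(s', t') \<in> (F \<inter> {x. v \<in> \<beta> x} \<times> {x. v \<in> \<beta> x})\<^sup>*" using t v(1) st(1,2) by blast
      from rtrancl_map_prod[OF this, of e] show ?thesis
        using st(3,4) rtrancl_mono[OF sub[of v]] by blast
    qed
  qed
qed

lemma is_tree_join:
  assumes T1: "is_tree N1 F1" and T2: "is_tree N2 F2" and disj: "N1 \<inter> N2 = {}"
    and ab: "a \<in> N1" "b \<in> N2"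
  shows "is_tree (N1 \<union> N2) (F1 \<union> F2 \<union> {(a, b), (b, a)})"
proof -
  let ?F = "F1 \<union> F2 \<union> {(a, b), (b, a)}"
  note t1 = T1[unfolded is_tree_def] and t2 = T2[unfolded is_tree_def]
  have F: "F1 \<subseteq> N1 \<times> N1" "F2 \<subseteq> N2 \<times> N2" using t1 t2 by simp_all
  have conn1: "(x, y) \<in> ?F\<^sup>*" if "x \<in> N1" "y \<in> N1" for x y
    using t1 that rtrancl_mono[of F1 ?F] by blast
  have conn2: "(x, y) \<in> ?F\<^sup>*" if "x \<in> N2" "y \<in> N2" for x y
    using t2 that rtrancl_mono[of F2 ?F] by blast
  have bridge: "(a, b) \<in> ?F\<^sup>*" "(b, a) \<in> ?F\<^sup>*" by auto
  have conn: "(x, y) \<in> ?F\<^sup>*" if "x \<in> N1 \<union> N2" "y \<in> N1 \<union> N2" for x y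
  proof -
    have "(x, a) \<in> ?F\<^sup>*"
      using that(1) conn1[OF _ ab(1)] rtrancl_trans[OF conn2[OF _ ab(2)] bridge(2)] by blast
    moreover have "(a, y) \<in> ?F\<^sup>*"
      using that(2) conn1[OF ab(1)] rtrancl_trans[OF bridge(1) conn2[OF ab(2)]] by blast
    ultimately show ?thesis by (rule rtrancl_trans)
  qed
  have fin: "finite F1" "finite F2"
    using t1 t2 F by (meson finite_SigmaI finite_subset)+
  have new: "a \<noteq> b" "(a, b) \<notin> F1 \<union> F2" "(b, a) \<notin> F1 \<union> F2" "F1 \<inter> F2 = {}"
    using ab disj F by auto
  have "card ?F = card F1 + card F2 + 2"
    using fin new by (simp add: card_Un_disjoint)
  moreover have "card (N1 \<union> N2) = card N1 + card N2"
    using t1 t2 disj by (simp add: card_Un_disjoint)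
  moreover have "card N1 > 0" "card N2 > 0" using t1 t2 by (simp_all add: card_gt_0_iff)
  ultimately have "card ?F = 2 * (card (N1 \<union> N2) - 1)" using t1 t2 by simp
  moreover have "(x, x) \<notin> ?F" for x using new t1 t2 by auto
  moreover have "(y, x) \<in> ?F" if "(x, y) \<in> ?F" for x y using that t1 t2 by auto
  ultimately show ?thesis using t1 t2 F ab conn unfolding is_tree_def by auto
qed

lemma rtrancl_Restr_lift:
  assumes st: "(s, t) \<in> (F' \<inter> {x. v \<in> \<beta>' x} \<times> {x. v \<in> \<beta>' x})\<^sup>*"
    and F': "F' \<subseteq> N' \<times> N'" "F' \<subseteq> F" and eq: "\<And>x. x \<in> N' \<Longrightarrow> \<beta> x = \<beta>' x"
  shows "(s, t) \<in> (F \<inter> {x. v \<in> \<beta> x} \<times> {x. v \<in> \<beta> x})\<^sup>*"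
proof -
  have "F' \<inter> {x. v \<in> \<beta>' x} \<times> {x. v \<in> \<beta>' x} \<subseteq> F \<inter> {x. v \<in> \<beta> x} \<times> {x. v \<in> \<beta> x}"
  proof (rule subsetI, clarify)
    fix x y assume xy: "(x, y) \<in> F'" "v \<in> \<beta>' x" "v \<in> \<beta>' y"
    then have "x \<in> N'" "y \<in> N'" using F'(1) by auto
    then show "(x, y) \<in> F \<inter> {x. v \<in> \<beta> x} \<times> {x. v \<in> \<beta> x}" using xy F'(2) eq by auto
  qed
  then show ?thesis using st rtrancl_mono by blast
qed

lemma tree_decomp_join:
  assumes V: "V1 \<union> V2 = fst K" "V1 \<inter> V2 = {}"
    and E: "\<And>u v. (u, v) \<in> snd K \<Longrightarrow> (u \<in> V1 \<and> v \<in> V1) \<or> (u \<in> V2 \<and> v \<in> V2)"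
    and td1: "tree_decomp (induced K V1) N1 F1 \<beta>1" and td2: "tree_decomp (induced K V2) N2 F2 \<beta>2"
    and disj: "N1 \<inter> N2 = {}" and ab: "a \<in> N1" "b \<in> N2"
  shows "tree_decomp K (N1 \<union> N2) (F1 \<union> F2 \<union> {(a, b), (b, a)}) (\<lambda>t. if t \<in> N1 then \<beta>1 t else \<beta>2 t)"
proof -
  define F where "F = F1 \<union> F2 \<union> {(a, b), (b, a)}"
  define \<beta> where "\<beta> t = (if t \<in> N1 then \<beta>1 t else \<beta>2 t)" for t
  note t1 = td1[unfolded tree_decomp_def induced_def fst_conv snd_conv]
  note t2 = td2[unfolded tree_decomp_def induced_def fst_conv snd_conv]
  have F12: "F1 \<subseteq> N1 \<times> N1" "F2 \<subseteq> N2 \<times> N2" using t1 t2 unfolding is_tree_def by auto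
  have \<beta>12: "\<And>t. t \<in> N1 \<Longrightarrow> \<beta> t = \<beta>1 t" "\<And>t. t \<in> N2 \<Longrightarrow> \<beta> t = \<beta>2 t"
    using disj unfolding \<beta>_def by auto
  have "tree_decomp K (N1 \<union> N2) F \<beta>"
    unfolding tree_decomp_def
  proof (intro conjI ballI allI impI)
    show "is_tree (N1 \<union> N2) F" unfolding F_def
      using is_tree_join[OF conjunct1[OF t1] conjunct1[OF t2] disj ab] .
    show "\<beta> t \<subseteq> fst K" if "t \<in> N1 \<union> N2" for t
    proof (cases "t \<in> N1")
      case True then show ?thesis using t1 V(1) \<beta>12 by blast
    next
      case False then show ?thesis using that t2 V(1) \<beta>12 by blast
    qed
    show "\<exists>t\<in>N1 \<union> N2. v \<in> \<beta> t" if v: "v \<in> fst K" for v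
    proof (cases "v \<in> V1")
      case True then show ?thesis using t1 \<beta>12 by (metis Un_iff)
    next
      case False then show ?thesis using v t2 V \<beta>12 by (metis Un_iff)
    qed
    show "\<exists>t\<in>N1 \<union> N2. u \<in> \<beta> t \<and> v \<in> \<beta> t" if uv: "(u, v) \<in> snd K" for u v
      using E[OF uv]
    proof
      assume "u \<in> V1 \<and> v \<in> V1"
      then obtain t where "t \<in> N1" "u \<in> \<beta>1 t" "v \<in> \<beta>1 t" using uv t1 by blast
      then show ?thesis using \<beta>12 by (intro bexI[of _ t]) auto
    next
      assume "u \<in> V2 \<and> v \<in> V2"
      then obtain t where "t \<in> N2" "u \<in> \<beta>2 t" "v \<in> \<beta>2 t" using uv t2 by blast
      then show ?thesis using \<beta>12 by (intro bexI[of _ t]) auto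
    qed
    show "(s, t) \<in> (F \<inter> {x. v \<in> \<beta> x} \<times> {x. v \<in> \<beta> x})\<^sup>*"
      if v: "v \<in> fst K" "s \<in> N1 \<union> N2" "t \<in> N1 \<union> N2" "v \<in> \<beta> s" "v \<in> \<beta> t" for v s t
    proof (cases "v \<in> V1")
      case True
      then have "s \<notin> N2" "t \<notin> N2" using v t2 V(2) \<beta>12 by blast+
      then have "s \<in> N1" "t \<in> N1" using v by auto
      moreover have "v \<in> \<beta>1 s" "v \<in> \<beta>1 t" using v \<beta>12 calculation by auto
      ultimately have "(s, t) \<in> (F1 \<inter> {x. v \<in> \<beta>1 x} \<times> {x. v \<in> \<beta>1 x})\<^sup>*" using t1 True by blast
      moreover have "F1 \<subseteq> F" unfolding F_def by blast
      ultimately show ?thesis by (rule rtrancl_Restr_lift[OF _ F12(1) _ \<beta>12(1)])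
    next
      case False
      then have "v \<in> V2" using v V by auto
      have "s \<notin> N1" "t \<notin> N1" using v t1 False \<beta>12 by blast+
      then have "s \<in> N2" "t \<in> N2" using v by auto
      moreover have "v \<in> \<beta>2 s" "v \<in> \<beta>2 t" using v \<beta>12 calculation by auto
      ultimately have "(s, t) \<in> (F2 \<inter> {x. v \<in> \<beta>2 x} \<times> {x. v \<in> \<beta>2 x})\<^sup>*" using t2 \<open>v \<in> V2\<close> by blast
      moreover have "F2 \<subseteq> F" unfolding F_def by blast
      ultimately show ?thesis by (rule rtrancl_Restr_lift[OF _ F12(2) _ \<beta>12(2)])
    qed
  qed
  then show ?thesis unfolding F_def \<beta>_def .
qed

lemma treewidth_le_disjoint_union:
  assumes K: "finite_graph K" and V: "V1 \<union> V2 = fst K" "V1 \<inter> V2 = {}"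
    and E: "\<And>u v. (u, v) \<in> snd K \<Longrightarrow> (u \<in> V1 \<and> v \<in> V1) \<or> (u \<in> V2 \<and> v \<in> V2)"
    and tw: "treewidth (induced K V1) \<le> k" "treewidth (induced K V2) \<le> k"
  shows "treewidth K \<le> k"
proof -
  have K12: "finite_graph (induced K V1)" "finite_graph (induced K V2)"
    using finite_graph_induced[OF K] V by auto
  obtain N1 F1 \<beta>1 where d1: "tree_decomp (induced K V1) N1 F1 \<beta>1" "\<forall>t\<in>N1. card (\<beta>1 t) \<le> k + 1"
    using tw(1) treewidth_le_iff[OF K12(1)] by blast
  obtain N2 F2 \<beta>2 where d2: "tree_decomp (induced K V2) N2 F2 \<beta>2" "\<forall>t\<in>N2. card (\<beta>2 t) \<le> k + 1"
    using tw(2) treewidth_le_iff[OF K12(2)] by blast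
  \<comment> \<open>move the two trees apart, to even and odd nodes, and join them by an edge\<close>
  define e1 e2 :: "nat \<Rightarrow> nat" where "e1 n = 2 * n" and "e2 n = 2 * n + 1" for n
  have inj: "inj_on e1 N1" "inj_on e2 N2" unfolding e1_def e2_def inj_on_def by auto
  have disj: "e1 ` N1 \<inter> e2 ` N2 = {}" unfolding e1_def e2_def by (auto, presburger)
  define \<gamma>1 \<gamma>2 where "\<gamma>1 = \<beta>1 \<circ> the_inv_into N1 e1" and "\<gamma>2 = \<beta>2 \<circ> the_inv_into N2 e2"
  have d1': "tree_decomp (induced K V1) (e1 ` N1) (map_prod e1 e1 ` F1) \<gamma>1"
    unfolding \<gamma>1_def by (rule tree_decomp_image[OF d1(1) inj(1)])
  have d2': "tree_decomp (induced K V2) (e2 ` N2) (map_prod e2 e2 ` F2) \<gamma>2"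
    unfolding \<gamma>2_def by (rule tree_decomp_image[OF d2(1) inj(2)])
  have c1: "card (\<gamma>1 t) \<le> k + 1" if "t \<in> e1 ` N1" for t
    using that d1(2) the_inv_into_f_f[OF inj(1)] unfolding \<gamma>1_def by auto
  have c2: "card (\<gamma>2 t) \<le> k + 1" if "t \<in> e2 ` N2" for t
    using that d2(2) the_inv_into_f_f[OF inj(2)] unfolding \<gamma>2_def by auto
  have "N1 \<noteq> {}" "N2 \<noteq> {}" using d1(1) d2(1) unfolding tree_decomp_def is_tree_def by blast+
  then obtain a b where ab: "a \<in> e1 ` N1" "b \<in> e2 ` N2" by blast
  note td = tree_decomp_join[OF V E d1' d2' disj ab]
  have "\<forall>t\<in>e1 ` N1 \<union> e2 ` N2. card (if t \<in> e1 ` N1 then \<gamma>1 t else \<gamma>2 t) \<le> k + 1"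
    using c1 c2 by auto
  with td show ?thesis using treewidth_le_iff[OF K] by blast
qed

lemma treewidth_le_if_parts:
  assumes "finite I"
  shows "finite_graph K \<Longrightarrow> lab ` fst K \<subseteq> I \<Longrightarrow> (\<And>u v. (u, v) \<in> snd K \<Longrightarrow> lab u = lab v)
    \<Longrightarrow> (\<And>i. i \<in> I \<Longrightarrow> treewidth (induced K {v\<in>fst K. lab v = i}) \<le> k) \<Longrightarrow> treewidth K \<le> k"
  using assms
proof (induction I arbitrary: K rule: finite_induct)
  case empty
  then show ?case using treewidth_le_card by auto
next
  case (insert i I)
  define V1 V2 where "V1 = {v\<in>fst K. lab v \<noteq> i}" and "V2 = {v\<in>fst K. lab v = i}"
  have K: "finite_graph K" by (rule insert.prems(1))
  have E: "(u \<in> V1 \<and> v \<in> V1) \<or> (u \<in> V2 \<and> v \<in> V2)" if "(u, v) \<in> snd K" for u v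
    using insert.prems(3)[OF that] that K unfolding V1_def V2_def finite_graph_def by auto
  have "treewidth (induced K V1) \<le> k"
  proof (rule insert.IH)
    show "finite_graph (induced K V1)" using finite_graph_induced[OF K] unfolding V1_def by auto
    show "lab ` fst (induced K V1) \<subseteq> I" using insert.prems(2) unfolding V1_def induced_def by auto
    show "lab u = lab v" if "(u, v) \<in> snd (induced K V1)" for u v
      using insert.prems(3) that unfolding induced_def by auto
    show "treewidth (induced (induced K V1) {v \<in> fst (induced K V1). lab v = j}) \<le> k" if "j \<in> I" for j
    proof -
      have "{v \<in> fst (induced K V1). lab v = j} = {v\<in>fst K. lab v = j}" "{v\<in>fst K. lab v = j} \<subseteq> V1"
        using that insert.hyps(2) unfolding induced_def V1_def by auto
      then show ?thesis using insert.prems(4)[of j] that induced_induced by simp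
    qed
  qed
  moreover have "treewidth (induced K V2) \<le> k" using insert.prems(4)[of i] unfolding V2_def by simp
  ultimately show ?case
    by (intro treewidth_le_disjoint_union[OF K _ _ E]) (auto simp: V1_def V2_def)
qed

lemma rtrancl_avoid_leaf:
  assumes "(a, b) \<in> Q\<^sup>*" "a \<noteq> t" "b \<noteq> t" "s \<noteq> t"
    and out: "\<And>y. (t, y) \<in> Q \<Longrightarrow> y = s" and inn: "\<And>y. (y, t) \<in> Q \<Longrightarrow> y = s"
  shows "(a, b) \<in> (Q - {(t, s), (s, t)})\<^sup>*"
proof -
  let ?Q = "Q - {(t, s), (s, t)}"
  \<comment> \<open>a walk entering the leaf t must come from s and return to s\<close>
  have "(b \<noteq> t \<longrightarrow> (a, b) \<in> ?Q\<^sup>*) \<and> (b = t \<longrightarrow> (a, s) \<in> ?Q\<^sup>*)"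
    using assms(1)
  proof (induction rule: rtrancl_induct)
    case base then show ?case using assms(2) by simp
  next
    case (step y z)
    consider "z = t" | "y = t" "z \<noteq> t" | "y \<noteq> t" "z \<noteq> t" by blast
    then show ?case
    proof cases
      case 1 then show ?thesis using inn step(2,3) assms(4) by auto
    next
      case 2 then show ?thesis using out step(2,3) by auto
    next
      case 3
      then have "(y, z) \<in> ?Q" using step(2) by auto
      then show ?thesis using step(3) 3 by (meson rtrancl.rtrancl_into_rtrancl)
    qed
  qed
  then show ?thesis using assms(3) by simp
qed

lemma is_tree_has_leaf:
  assumes T: "is_tree N F" and c: "card N \<ge> 2"
  obtains t s where "t \<in> N" "s \<in> N" "{y. (t, y) \<in> F} = {s}"
proof -
  have fN: "finite N" and FN: "F \<subseteq> N \<times> N" and cF: "card F = 2 * (card N - 1)"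
    using T unfolding is_tree_def by auto
  have fin: "finite {y. (u, y) \<in> F}" for u
    using FN fN by (auto intro: finite_subset)
  have Fsig: "F = Sigma N (\<lambda>u. {y. (u, y) \<in> F})" using FN by auto
  have degrees: "card F = (\<Sum>u\<in>N. card {y. (u, y) \<in> F})"
    by (subst Fsig) (simp add: card_SigmaI fN fin)
  have "\<exists>t\<in>N. card {y. (t, y) \<in> F} < 2"
  proof (rule ccontr)
    assume "\<not> ?thesis"
    then have "(\<Sum>u\<in>N. card {y. (u, y) \<in> F}) \<ge> (\<Sum>u\<in>N. 2)" by (intro sum_mono) auto
    then show False using degrees cF c by simp
  qed
  then obtain t where t: "t \<in> N" "card {y. (t, y) \<in> F} < 2" by blast
  have "\<not> N \<subseteq> {t}" using c card_mono[of "{t}" N] by auto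
  then obtain u where "u \<in> N" "u \<noteq> t" by blast
  then have "(t, u) \<in> F\<^sup>*" using T t(1) unfolding is_tree_def by blast
  then obtain y where "(t, y) \<in> F" using \<open>u \<noteq> t\<close> by (cases rule: converse_rtranclE) auto
  then have "card {y. (t, y) \<in> F} = 1" using t(2) fin[of t] by (cases "card {y. (t, y) \<in> F}") auto
  then obtain s where s: "{y. (t, y) \<in> F} = {s}" by (rule card_1_singletonE)
  then show ?thesis using that t(1) FN by blast
qed

lemma is_tree_remove_leaf:
  assumes T: "is_tree N F" and t: "t \<in> N" and nb: "{y. (t, y) \<in> F} = {s}"
  shows "is_tree (N - {t}) (F - {(t, s), (s, t)})"
proof -
  note tr = T[unfolded is_tree_def]
  have ts: "(t, s) \<in> F" "(s, t) \<in> F" using nb tr by auto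
  have st: "s \<noteq> t" "s \<in> N" using ts tr by auto
  have out: "\<And>y. (t, y) \<in> F \<Longrightarrow> y = s" using nb by auto
  have inn: "\<And>y. (y, t) \<in> F \<Longrightarrow> y = s" using out tr by blast
  have "card (F - {(t, s), (s, t)}) = card F - 2"
    using ts st by (subst card_Diff_subset) auto
  moreover have "card N \<ge> 2"
    using st t tr card_mono[of N "{s, t}"] by auto
  moreover have "F - {(t, s), (s, t)} \<subseteq> (N - {t}) \<times> (N - {t})"
    using tr out inn by fastforce
  moreover have "(a, b) \<in> (F - {(t, s), (s, t)})\<^sup>*" if "a \<in> N - {t}" "b \<in> N - {t}" for a b
    using rtrancl_avoid_leaf[of a b F t s] tr that st out inn by auto
  ultimately show ?thesis using tr t st unfolding is_tree_def by auto
qed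

lemma leaf_bag_private:
  assumes td: "tree_decomp H N F \<beta>" and t: "t \<in> N" and nb: "{y. (t, y) \<in> F} = {s}"
    and x: "x \<in> \<beta> t - \<beta> s"
  shows "\<And>t'. t' \<in> N \<Longrightarrow> x \<in> \<beta> t' \<Longrightarrow> t' = t"
    and "\<And>y. (x, y) \<in> snd H \<or> (y, x) \<in> snd H \<Longrightarrow> y \<in> \<beta> t"
proof -
  note td = td[unfolded tree_decomp_def]
  show only_in_t: "t' = t" if t': "t' \<in> N" "x \<in> \<beta> t'" for t'
  proof -
    have "(t, t') \<in> (F \<inter> {u. x \<in> \<beta> u} \<times> {u. x \<in> \<beta> u})\<^sup>*" using td t t' x by blast
    then show "t' = t"
    proof (cases rule: converse_rtranclE)
      case (step y)
      then have "y = s" "x \<in> \<beta> y" using nb by auto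
      then show ?thesis using x by simp
    qed simp
  qed
  show "y \<in> \<beta> t" if xy: "(x, y) \<in> snd H \<or> (y, x) \<in> snd H" for y
  proof -
    obtain t' where "t' \<in> N" "x \<in> \<beta> t'" "y \<in> \<beta> t'" using xy td by blast
    then show ?thesis using only_in_t by blast
  qed
qed

lemma tree_decomp_remove_leaf:
  assumes TD: "tree_decomp H N F \<beta>" and t: "t \<in> N" and nb: "{y. (t, y) \<in> F} = {s}"
  shows "tree_decomp (induced H (fst H - (\<beta> t - \<beta> s))) (N - {t}) (F - {(t, s), (s, t)}) \<beta>"
proof -
  let ?R = "\<beta> t - \<beta> s"
  note td = TD[unfolded tree_decomp_def]
  have out: "\<And>y. (t, y) \<in> F \<Longrightarrow> y = s" using nb by auto
  have inn: "\<And>y. (y, t) \<in> F \<Longrightarrow> y = s" using out td unfolding is_tree_def by blast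
  have st: "s \<noteq> t" "s \<in> N" using nb td unfolding is_tree_def by auto
  note only_in_t = leaf_bag_private[OF TD t nb]
  show ?thesis
    unfolding tree_decomp_def induced_def fst_conv snd_conv
  proof (intro conjI allI impI ballI)
    show "is_tree (N - {t}) (F - {(t, s), (s, t)})" using is_tree_remove_leaf td t nb by blast
    show "\<beta> u \<subseteq> fst H - ?R" if "u \<in> N - {t}" for u
      using that td only_in_t(1) by blast
    show "\<exists>u\<in>N - {t}. v \<in> \<beta> u" if v: "v \<in> fst H - ?R" for v
    proof -
      obtain u where "u \<in> N" "v \<in> \<beta> u" using td v by auto
      then show ?thesis using v st by (cases "u = t") auto
    qed
    show "\<exists>u\<in>N - {t}. a \<in> \<beta> u \<and> b \<in> \<beta> u" if ab: "(a, b) \<in> snd H \<inter> (fst H - ?R) \<times> (fst H - ?R)" for a b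
    proof -
      obtain u where "u \<in> N" "a \<in> \<beta> u" "b \<in> \<beta> u" using td ab by blast
      then show ?thesis using ab st by (cases "u = t") auto
    qed
    show "(a, b) \<in> ((F - {(t, s), (s, t)}) \<inter> {x. v \<in> \<beta> x} \<times> {x. v \<in> \<beta> x})\<^sup>*"
      if v: "v \<in> fst H - ?R" and ab: "a \<in> N - {t}" "b \<in> N - {t}" "v \<in> \<beta> a" "v \<in> \<beta> b" for v a b
    proof -
      let ?Q = "F \<inter> {x. v \<in> \<beta> x} \<times> {x. v \<in> \<beta> x}"
      have "(a, b) \<in> ?Q\<^sup>*" using td v ab by auto
      then have "(a, b) \<in> (?Q - {(t, s), (s, t)})\<^sup>*"
        using ab st out inn by (intro rtrancl_avoid_leaf) auto
      moreover have "?Q - {(t, s), (s, t)} \<subseteq> (F - {(t, s), (s, t)}) \<inter> {x. v \<in> \<beta> x} \<times> {x. v \<in> \<beta> x}"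
        by auto
      ultimately show ?thesis using rtrancl_mono by blast
    qed
  qed
qed

section \<open>Graphs of bounded treewidth are sparse\<close>

definition min_weight :: "(nat \<Rightarrow> real) \<Rightarrow> nat \<times> nat \<Rightarrow> real" where
  "min_weight w e = min (w (fst e)) (w (snd e))"

lemma sum_Sigma_bag_le:
  fixes w :: "nat \<Rightarrow> real"
  assumes R: "R \<subseteq> Bg" and fB: "finite Bg" and cB: "card Bg \<le> k + 1" and w: "\<forall>x\<in>R. w x \<ge> 0"
  shows "(\<Sum>p\<in>Sigma R (\<lambda>x. Bg - {x}). w (fst p)) \<le> real k * (\<Sum>x\<in>R. w x)"
proof -
  have fR: "finite R" using R fB finite_subset by blast
  have "(\<Sum>p\<in>Sigma R (\<lambda>x. Bg - {x}). w (fst p)) = (\<Sum>x\<in>R. \<Sum>y\<in>Bg - {x}. w x)"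
    using fR fB by (subst sum.Sigma) (auto simp: case_prod_beta intro!: sum.cong)
  also have "\<dots> = (\<Sum>x\<in>R. real (card (Bg - {x})) * w x)" by simp
  also have "\<dots> \<le> (\<Sum>x\<in>R. real k * w x)"
  proof (intro sum_mono mult_right_mono)
    fix x assume x: "x \<in> R"
    then have "card (Bg - {x}) = card Bg - 1" using R fB by (simp add: subsetD)
    then show "real (card (Bg - {x})) \<le> real k" using cB by simp
    show "0 \<le> w x" using w x by simp
  qed
  finally show ?thesis by (simp add: sum_distrib_left)
qed

lemma sum_min_weight_edges_at_bag:
  fixes w :: "nat \<Rightarrow> real"
  assumes H: "finite_graph H" and irr: "\<forall>u. (u, u) \<notin> snd H" and R: "R \<subseteq> Bg" and fB: "finite Bg"
    and cB: "card Bg \<le> k + 1"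
    and nb: "\<forall>x\<in>R. \<forall>y. (x, y) \<in> snd H \<or> (y, x) \<in> snd H \<longrightarrow> y \<in> Bg"
    and w: "\<forall>x\<in>R. w x \<ge> 0"
  shows "(\<Sum>e\<in>{e\<in>snd H. fst e \<in> R \<or> snd e \<in> R}. min_weight w e) \<le> 2 * real k * (\<Sum>x\<in>R. w x)"
proof -
  have fE: "finite (snd H)" by (rule finite_graph_finite_edges[OF H])
  have fR: "finite R" using R fB finite_subset by blast
  \<comment> \<open>an edge at R costs at most the weight of an endpoint x in R, whose other neighbours all lie in the bag\<close>
  define Sg where "Sg = Sigma R (\<lambda>x. Bg - {x})"
  have fSg: "finite Sg" unfolding Sg_def using fR fB by auto
  define E1 where "E1 = {e\<in>snd H. fst e \<in> R}"
  define E2 where "E2 = {e\<in>snd H. fst e \<notin> R \<and> snd e \<in> R}"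
  have split: "{e\<in>snd H. fst e \<in> R \<or> snd e \<in> R} = E1 \<union> E2" "E1 \<inter> E2 = {}"
    unfolding E1_def E2_def by auto
  have fE12: "finite E1" "finite E2" unfolding E1_def E2_def using fE by auto
  have E1S: "E1 \<subseteq> Sg"
  proof
    fix e assume e: "e \<in> E1"
    obtain x y where xy: "e = (x, y)" by (cases e)
    have "(x, y) \<in> snd H" "x \<in> R" using e xy unfolding E1_def by auto
    then have "y \<in> Bg" "y \<noteq> x" using nb irr by auto
    then show "e \<in> Sg" using xy \<open>x \<in> R\<close> unfolding Sg_def by auto
  qed
  have E2S: "E2 \<subseteq> prod.swap ` Sg"
  proof
    fix e assume e: "e \<in> E2"
    obtain y x where xy: "e = (y, x)" by (cases e)
    have "(y, x) \<in> snd H" "x \<in> R" using e xy unfolding E2_def by auto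
    then have "y \<in> Bg" "y \<noteq> x" using nb irr by auto
    then have "(x, y) \<in> Sg" using \<open>x \<in> R\<close> unfolding Sg_def by auto
    then show "e \<in> prod.swap ` Sg" using xy by force
  qed
  have wS: "\<forall>p\<in>Sg. w (fst p) \<ge> 0" using w unfolding Sg_def by auto
  have sSg: "(\<Sum>p\<in>Sg. w (fst p)) \<le> real k * (\<Sum>x\<in>R. w x)"
    unfolding Sg_def by (rule sum_Sigma_bag_le[OF R fB cB w])
  have "(\<Sum>e\<in>{e\<in>snd H. fst e \<in> R \<or> snd e \<in> R}. min_weight w e) = (\<Sum>e\<in>E1. min_weight w e) + (\<Sum>e\<in>E2. min_weight w e)"
    unfolding split(1) using fE12 split(2) by (simp add: sum.union_disjoint)
  also have "(\<Sum>e\<in>E1. min_weight w e) \<le> (\<Sum>e\<in>E1. w (fst e))" unfolding min_weight_def by (intro sum_mono) auto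
  also have "\<dots> \<le> (\<Sum>p\<in>Sg. w (fst p))" using E1S fSg wS by (intro sum_mono2) auto
  also have "(\<Sum>e\<in>E2. min_weight w e) \<le> (\<Sum>e\<in>E2. w (snd e))" unfolding min_weight_def by (intro sum_mono) auto
  also have "\<dots> \<le> (\<Sum>e\<in>prod.swap ` Sg. w (snd e))" using E2S fSg wS by (intro sum_mono2) auto
  also have "\<dots> = (\<Sum>p\<in>Sg. w (fst p))" by (subst sum.reindex) (auto simp: inj_on_def)
  finally show ?thesis using sSg by linarith
qed

lemma sum_min_weight_peel:
  fixes w :: "nat \<Rightarrow> real"
  assumes H: "finite_graph H" and irr: "\<forall>u. (u, u) \<notin> snd H" and R: "R \<subseteq> fst H" "R \<subseteq> Bg"
    and Bg: "finite Bg" "card Bg \<le> k + 1"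
    and nb: "\<forall>x\<in>R. \<forall>y. (x, y) \<in> snd H \<or> (y, x) \<in> snd H \<longrightarrow> y \<in> Bg"
    and w: "\<forall>v\<in>fst H. w v \<ge> 0"
    and rest: "(\<Sum>e\<in>snd (induced H (fst H - R)). min_weight w e) \<le> 2 * real k * (\<Sum>v\<in>fst H - R. w v)"
  shows "(\<Sum>e\<in>snd H. min_weight w e) \<le> 2 * real k * (\<Sum>v\<in>fst H. w v)"
proof -
  let ?ER = "{e\<in>snd H. fst e \<in> R \<or> snd e \<in> R}"
  have EV: "snd H \<subseteq> fst H \<times> fst H" and fV: "finite (fst H)" using H unfolding finite_graph_def by auto
  have "snd H = snd (induced H (fst H - R)) \<union> ?ER" "snd (induced H (fst H - R)) \<inter> ?ER = {}"
    unfolding induced_def using EV by auto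
  then have "(\<Sum>e\<in>snd H. min_weight w e) = (\<Sum>e\<in>snd (induced H (fst H - R)). min_weight w e) + (\<Sum>e\<in>?ER. min_weight w e)"
    using finite_graph_finite_edges[OF H] by (metis (no_types, lifting) finite_Un sum.union_disjoint)
  also have "\<dots> \<le> 2 * real k * (\<Sum>v\<in>fst H - R. w v) + 2 * real k * (\<Sum>x\<in>R. w x)"
  proof (rule add_mono[OF rest sum_min_weight_edges_at_bag[OF H irr R(2) Bg nb]])
    show "\<forall>x\<in>R. 0 \<le> w x" using w R(1) by blast
  qed
  also have "\<dots> = 2 * real k * (\<Sum>v\<in>fst H. w v)"
    using sum.subset_diff[OF R(1) fV, of w] by (simp add: algebra_simps)
  finally show ?thesis .
qed

lemma sum_min_weight_le_tree_decomp:
  fixes w :: "nat \<Rightarrow> real"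
  assumes "tree_decomp H N F \<beta>" "finite_graph H" "\<forall>u. (u, u) \<notin> snd H"
    "\<forall>t\<in>N. card (\<beta> t) \<le> k + 1" "\<forall>v\<in>fst H. w v \<ge> 0"
  shows "(\<Sum>e\<in>snd H. min_weight w e) \<le> 2 * real k * (\<Sum>v\<in>fst H. w v)"
  using assms
proof (induction "card N" arbitrary: H N F \<beta> rule: less_induct)
  case less
  note TD = less.prems(1) and H = less.prems(2)
  have T: "is_tree N F" using TD unfolding tree_decomp_def by simp
  have fN: "finite N" "N \<noteq> {}" using T unfolding is_tree_def by auto
  have EV: "snd H \<subseteq> fst H \<times> fst H" using H unfolding finite_graph_def by auto
  have bags: "\<And>u. u \<in> N \<Longrightarrow> finite (\<beta> u) \<and> \<beta> u \<subseteq> fst H" and cover: "\<And>v. v \<in> fst H \<Longrightarrow> \<exists>u\<in>N. v \<in> \<beta> u"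
    using TD H unfolding tree_decomp_def finite_graph_def by (auto intro: finite_subset)
  show ?case
  proof (cases "card N \<ge> 2")
    case False
    moreover have "card N > 0" using fN by (simp add: card_gt_0_iff)
    ultimately have "card N = 1" by simp
    then obtain t where N: "N = {t}" by (rule card_1_singletonE)
    \<comment> \<open>a single bag covers the whole graph, so all of it is peeled at once\<close>
    have Vt: "fst H \<subseteq> \<beta> t" using cover N by auto
    show ?thesis
    proof (rule sum_min_weight_peel[OF H less.prems(3) subset_refl Vt])
      show "finite (\<beta> t)" "card (\<beta> t) \<le> k + 1" using bags less.prems(4) N by auto
      show "\<forall>x\<in>fst H. \<forall>y. (x, y) \<in> snd H \<or> (y, x) \<in> snd H \<longrightarrow> y \<in> \<beta> t" using EV Vt by auto
      show "\<forall>v\<in>fst H. 0 \<le> w v" by (rule less.prems(5))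
      show "(\<Sum>e\<in>snd (induced H (fst H - fst H)). min_weight w e) \<le> 2 * real k * (\<Sum>v\<in>fst H - fst H. w v)"
        unfolding induced_def by simp
    qed
  next
    case True
    obtain t s where ts: "t \<in> N" "s \<in> N" "{y. (t, y) \<in> F} = {s}" by (rule is_tree_has_leaf[OF T True])
    define R where "R = \<beta> t - \<beta> s"
    have R: "R \<subseteq> fst H" "R \<subseteq> \<beta> t" using bags ts(1) unfolding R_def by auto
    have "(\<Sum>e\<in>snd (induced H (fst H - R)). min_weight w e) \<le> 2 * real k * (\<Sum>v\<in>fst (induced H (fst H - R)). w v)"
    proof (rule less.hyps[of "N - {t}"])
      show "card (N - {t}) < card N" using ts(1) fN by (simp add: card_gt_0_iff)
      show "tree_decomp (induced H (fst H - R)) (N - {t}) (F - {(t, s), (s, t)}) \<beta>"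
        unfolding R_def by (rule tree_decomp_remove_leaf[OF TD ts(1,3)])
      show "finite_graph (induced H (fst H - R))" using finite_graph_induced[OF H] by auto
      show "\<forall>u. (u, u) \<notin> snd (induced H (fst H - R))" using less.prems(3) unfolding induced_def by auto
      show "\<forall>u\<in>N - {t}. card (\<beta> u) \<le> k + 1" using less.prems(4) by auto
      show "\<forall>v\<in>fst (induced H (fst H - R)). 0 \<le> w v" using less.prems(5) unfolding induced_def by auto
    qed
    moreover have "\<forall>x\<in>R. \<forall>y. (x, y) \<in> snd H \<or> (y, x) \<in> snd H \<longrightarrow> y \<in> \<beta> t"
      using leaf_bag_private(2)[OF TD ts(1,3)] unfolding R_def by blast
    moreover have "fst (induced H (fst H - R)) = fst H - R" unfolding induced_def by simp
    moreover have "finite (\<beta> t)" "card (\<beta> t) \<le> k + 1" using bags less.prems(4) ts(1) by auto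
    ultimately show ?thesis using sum_min_weight_peel[OF H less.prems(3) R] less.prems(5) by simp
  qed
qed

lemma sum_min_weight_le_treewidth:
  fixes w :: "nat \<Rightarrow> real"
  assumes "finite_graph H" "\<forall>u. (u, u) \<notin> snd H" "treewidth H \<le> k" "\<forall>v\<in>fst H. w v \<ge> 0"
  shows "(\<Sum>e\<in>snd H. min_weight w e) \<le> 2 * real k * (\<Sum>v\<in>fst H. w v)"
proof -
  obtain N F \<beta> where "tree_decomp H N F \<beta>" "\<forall>t\<in>N. card (\<beta> t) \<le> k + 1"
    using assms(1,3) treewidth_le_iff by blast
  then show ?thesis using sum_min_weight_le_tree_decomp assms(1,2,4) by blast
qed

section \<open>Fractional fragility implies pliability\<close>

definition copy_of :: "nat \<Rightarrow> nat \<Rightarrow> nat" where "copy_of i a = prod_encode (i, a)"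
definition copy_index :: "nat \<Rightarrow> nat" where "copy_index x = fst (prod_decode x)"
definition copy_orig :: "nat \<Rightarrow> nat" where "copy_orig x = snd (prod_decode x)"

lemma copy_of_simps[simp]: "copy_index (copy_of i a) = i" "copy_orig (copy_of i a) = a"
  unfolding copy_of_def copy_index_def copy_orig_def by simp_all

lemma copy_of_index_orig: "copy_of (copy_index x) (copy_orig x) = x"
  unfolding copy_of_def copy_index_def copy_orig_def by simp

lemma inj_copy_of: "inj (copy_of i)"
  unfolding inj_def copy_of_def by simp

definition avoiding :: "vstruct \<Rightarrow> nat set \<Rightarrow> vstruct" where
  "avoiding A Y = (fst A, \<lambda>f ys. if set ys \<inter> Y = {} then snd A f ys else 0)"

definition mixture :: "vstruct \<Rightarrow> nat \<Rightarrow> (nat \<Rightarrow> nat set) \<Rightarrow> (nat \<Rightarrow> real) \<Rightarrow> vstruct" where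
  "mixture A m Y q = ((\<lambda>(i, a). copy_of i a) ` ({..<m} \<times> fst A),
     \<lambda>f xs. \<Sum>i<m. if (\<forall>x\<in>set xs. copy_index x = i) \<and> set (map copy_orig xs) \<inter> Y i = {}
                   then q i * snd A f (map copy_orig xs) else 0)"

lemma fst_mixture: "fst (mixture A m Y q) = (\<lambda>(i, a). copy_of i a) ` ({..<m} \<times> fst A)"
  unfolding mixture_def by simp

lemma snd_mixture: "snd (mixture A m Y q) f xs = (\<Sum>i<m. if (\<forall>x\<in>set xs. copy_index x = i) \<and> set (map copy_orig xs) \<inter> Y i = {}
                   then q i * snd A f (map copy_orig xs) else 0)"
  unfolding mixture_def by simp

lemma finite_tuples: "finite A \<Longrightarrow> finite (tuples A n)"
  unfolding tuples_def using finite_lists_length_eq[of A n] by (simp add: conj_commute)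

lemma sum_tuples_mixture_copy:
  "(\<Sum>xs\<in>tuples (fst (mixture A m Y q)) n.
      (if (\<forall>x\<in>set xs. copy_index x = i) \<and> set (map copy_orig xs) \<inter> Y i = {} then q i * snd A f (map copy_orig xs) else 0)
      * c xs)
   = (\<Sum>ys\<in>tuples (fst A) n. q i * snd (avoiding A (Y i)) f ys * c (map (copy_of i) ys))"
  if "i < m" "finite (fst A)"
proof -
  let ?D = "fst (mixture A m Y q)"
  let ?T = "{xs \<in> tuples ?D n. \<forall>x\<in>set xs. copy_index x = i}"
  let ?g = "\<lambda>xs. (if (\<forall>x\<in>set xs. copy_index x = i) \<and> set (map copy_orig xs) \<inter> Y i = {} then q i * snd A f (map copy_orig xs) else 0) * c xs"
  have D: "?D = (\<lambda>(i, a). copy_of i a) ` ({..<m} \<times> fst A)" unfolding mixture_def by simp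
  have finD: "finite ?D" using that(2) D by simp
  have "(\<Sum>xs\<in>tuples ?D n. ?g xs) = (\<Sum>xs\<in>?T. ?g xs)"
    by (rule sum.mono_neutral_right) (use finD finite_tuples in auto)
  also have "\<dots> = (\<Sum>ys\<in>tuples (fst A) n. ?g (map (copy_of i) ys))"
  proof (rule sum.reindex_bij_betw[symmetric])
    show "bij_betw (map (copy_of i)) (tuples (fst A) n) ?T"
    proof (rule bij_betwI')
      show "(map (copy_of i) x = map (copy_of i) y) = (x = y)" for x y
        using inj_copy_of[of i] by (simp add: inj_map_eq_map)
      show "map (copy_of i) x \<in> ?T" if "x \<in> tuples (fst A) n" for x
        using that \<open>i < m\<close> unfolding tuples_def D by auto
      show "\<exists>x\<in>tuples (fst A) n. y = map (copy_of i) x" if "y \<in> ?T" for y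
      proof (intro bexI[of _ "map copy_orig y"])
        show "y = map (copy_of i) (map copy_orig y)"
          using that by (auto intro!: map_idI[symmetric] simp: copy_of_index_orig[of x, simplified] ) (metis copy_of_index_orig)
        show "map copy_orig y \<in> tuples (fst A) n" using that unfolding tuples_def D by auto
      qed
    qed
  qed
  also have "\<dots> = (\<Sum>ys\<in>tuples (fst A) n. q i * snd (avoiding A (Y i)) f ys * c (map (copy_of i) ys))"
    by (intro sum.cong refl) (auto simp: avoiding_def comp_def)
  finally show ?thesis .
qed

lemma sval_mixture:
  assumes "finite (fst A)"
  shows "sval \<sigma> (mixture A m Y q) C h = (\<Sum>i<m. q i * sval \<sigma> (avoiding A (Y i)) C (h \<circ> copy_of i))"
proof -
  let ?D = "fst (mixture A m Y q)"
  let ?t = "\<lambda>i f xs. (if (\<forall>x\<in>set xs. copy_index x = i) \<and> set (map copy_orig xs) \<inter> Y i = {} then q i * snd A f (map copy_orig xs) else 0)"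
  have "sval \<sigma> (mixture A m Y q) C h = (\<Sum>f\<in>fst \<sigma>. \<Sum>xs\<in>tuples ?D (snd \<sigma> f). (\<Sum>i<m. ?t i f xs) * snd C f (map h xs))"
    unfolding sval_def by (simp add: mixture_def)
  also have "\<dots> = (\<Sum>f\<in>fst \<sigma>. \<Sum>i<m. \<Sum>xs\<in>tuples ?D (snd \<sigma> f). ?t i f xs * snd C f (map h xs))"
    by (simp add: sum_distrib_right sum.swap[of _ "{..<m}"])
  also have "\<dots> = (\<Sum>f\<in>fst \<sigma>. \<Sum>i<m. \<Sum>ys\<in>tuples (fst A) (snd \<sigma> f). q i * snd (avoiding A (Y i)) f ys * snd C f (map h (map (copy_of i) ys)))"
    by (intro sum.cong refl sum_tuples_mixture_copy[OF _ assms]) auto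
  also have "\<dots> = (\<Sum>i<m. q i * sval \<sigma> (avoiding A (Y i)) C (h \<circ> copy_of i))"
    unfolding sval_def by (simp add: sum.swap[of _ "fst \<sigma>"] sum_distrib_left mult.assoc avoiding_def)
  finally show ?thesis .
qed

lemma sval_avoiding_le:
  assumes "is_struct \<sigma> A" "is_struct \<sigma> C"
  shows "sval \<sigma> (avoiding A Y) C g \<le> sval \<sigma> A C g"
proof -
  have "\<And>f xs. 0 \<le> snd A f xs" "\<And>f xs. 0 \<le> snd C f xs" using assms unfolding is_struct_def by auto
  then show ?thesis unfolding sval_def avoiding_def by (auto intro!: sum_mono mult_right_mono)
qed

lemma sval_mixture_le_sopt:
  assumes A: "is_struct \<sigma> A" and C: "is_struct \<sigma> C" and q: "\<forall>i<m. 0 \<le> q i" and sq: "(\<Sum>i<m. q i) \<le> 1"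
    and h: "\<forall>x\<in>fst (mixture A m Y q). h x \<in> fst C"
  shows "sval \<sigma> (mixture A m Y q) C h \<le> sopt \<sigma> A C"
proof -
  have fA: "finite (fst A)" "finite (fst C)" using A C unfolding is_struct_def by auto
  have "sval \<sigma> (avoiding A (Y i)) C (h \<circ> copy_of i) \<le> sopt \<sigma> A C" if "i < m" for i
  proof -
    have "\<forall>a\<in>fst A. (h \<circ> copy_of i) a \<in> fst C" using h that unfolding mixture_def by force
    then have "sval \<sigma> A C (h \<circ> copy_of i) \<le> sopt \<sigma> A C" using sval_le_sopt fA by blast
    then show ?thesis using sval_avoiding_le[OF A C] order_trans by blast
  qed
  then have "(\<Sum>i<m. q i * sval \<sigma> (avoiding A (Y i)) C (h \<circ> copy_of i)) \<le> (\<Sum>i<m. q i * sopt \<sigma> A C)"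
    using q by (intro sum_mono mult_left_mono) auto
  also have "\<dots> = (\<Sum>i<m. q i) * sopt \<sigma> A C" by (simp add: sum_distrib_right)
  also have "\<dots> \<le> sopt \<sigma> A C" using sq sopt_nonneg[OF A C]
    by (metis mult.commute mult_left_le)
  finally show ?thesis using sval_mixture[OF fA(1)] by simp
qed

lemma indicator_meets_le_sum:
  assumes "finite S"
  shows "(if S \<inter> Y = {} then 0 else (1::real)) \<le> (\<Sum>a\<in>S. if a \<in> Y then 1 else 0)"
proof (cases "S \<inter> Y = {}")
  case True then show ?thesis by (simp add: sum_nonneg)
next
  case False
  then obtain a where a: "a \<in> S" "a \<in> Y" by auto
  have "(1::real) = (if a \<in> Y then 1 else 0)" using a by simp
  also have "\<dots> \<le> (\<Sum>a\<in>S. if a \<in> Y then 1 else 0)"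
    using a assms by (intro member_le_sum) auto
  finally show ?thesis using False by simp
qed

lemma weight_avoiding_ge:
  fixes q :: "nat \<Rightarrow> real" and r :: nat
  assumes q: "\<forall>i<m. 0 \<le> q i" and sq: "1 - \<eta> \<le> (\<Sum>i<m. q i)"
    and thin: "\<forall>a\<in>S. (\<Sum>i<m. if a \<in> Y i then q i else 0) \<le> \<epsilon>f"
    and S: "finite S" "card S \<le> r" and ef: "\<epsilon>f \<ge> 0"
  shows "(\<Sum>i<m. if S \<inter> Y i = {} then q i else 0) \<ge> 1 - \<eta> - real r * \<epsilon>f"
proof -
  have "(\<Sum>i<m. if S \<inter> Y i = {} then 0 else q i) \<le> (\<Sum>i<m. q i * (\<Sum>a\<in>S. if a \<in> Y i then 1 else 0))"
  proof (intro sum_mono)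
    fix i assume "i \<in> {..<m}"
    have ind: "(if S \<inter> Y i = {} then 0 else (1::real)) \<le> (\<Sum>a\<in>S. if a \<in> Y i then (1::real) else 0)"
      by (rule indicator_meets_le_sum[OF S(1)])
    have "q i * (if S \<inter> Y i = {} then 0 else 1) \<le> q i * (\<Sum>a\<in>S. if a \<in> Y i then 1 else 0)"
      by (rule mult_left_mono[OF ind]) (use q \<open>i \<in> {..<m}\<close> in auto)
    then show "(if S \<inter> Y i = {} then 0 else q i) \<le> q i * (\<Sum>a\<in>S. if a \<in> Y i then 1 else 0)"
      by (simp split: if_splits)
  qed
  also have "\<dots> = (\<Sum>a\<in>S. \<Sum>i<m. if a \<in> Y i then q i else 0)"
    by (simp add: sum_distrib_left sum.swap[of _ S] if_distrib cong: if_cong)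
  also have "\<dots> \<le> (\<Sum>a\<in>S. \<epsilon>f)" using thin by (intro sum_mono) auto
  also have "\<dots> \<le> real r * \<epsilon>f" using S ef by (simp add: mult_right_mono)
  finally have hit: "(\<Sum>i<m. if S \<inter> Y i = {} then 0 else q i) \<le> real r * \<epsilon>f" .
  have "(\<Sum>i<m. q i) = (\<Sum>i<m. if S \<inter> Y i = {} then q i else 0) + (\<Sum>i<m. if S \<inter> Y i = {} then 0 else q i)"
    by (simp add: sum.distrib[symmetric] cong: if_cong) (intro sum.cong, auto)
  then show ?thesis using hit sq by linarith
qed

lemma sval_mixture_ge:
  fixes q :: "nat \<Rightarrow> real" and r :: nat
  assumes A: "is_struct \<sigma> A" and C: "is_struct \<sigma> C" and ar: "\<forall>f\<in>fst \<sigma>. snd \<sigma> f \<le> r"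
    and q: "\<forall>i<m. 0 \<le> q i" and sq: "1 - \<eta> \<le> (\<Sum>i<m. q i)"
    and thin: "\<forall>a\<in>fst A. (\<Sum>i<m. if a \<in> Y i then q i else 0) \<le> \<epsilon>f" and ef: "\<epsilon>f \<ge> 0"
  shows "sval \<sigma> (mixture A m Y q) C (hs \<circ> copy_orig) \<ge> (1 - \<eta> - real r * \<epsilon>f) * sval \<sigma> A C hs"
proof -
  have fA: "finite (fst A)" using A unfolding is_struct_def by auto
  have Apos: "\<And>f xs. 0 \<le> snd A f xs" and Cpos: "\<And>f xs. 0 \<le> snd C f xs"
    using A C unfolding is_struct_def by auto
  let ?w = "\<lambda>ys. (\<Sum>i<m. if set ys \<inter> Y i = {} then q i else 0)"
  have "sval \<sigma> (mixture A m Y q) C (hs \<circ> copy_orig) = (\<Sum>i<m. q i * sval \<sigma> (avoiding A (Y i)) C hs)"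
    unfolding sval_mixture[OF fA] by (simp add: comp_def)
  also have "\<dots> = (\<Sum>f\<in>fst \<sigma>. \<Sum>ys\<in>tuples (fst A) (snd \<sigma> f). snd A f ys * snd C f (map hs ys) * ?w ys)"
  proof -
    have "(\<Sum>i<m. q i * sval \<sigma> (avoiding A (Y i)) C hs) = (\<Sum>i<m. \<Sum>f\<in>fst \<sigma>. \<Sum>ys\<in>tuples (fst A) (snd \<sigma> f).
            snd A f ys * snd C f (map hs ys) * (if set ys \<inter> Y i = {} then q i else 0))"
      unfolding sval_def avoiding_def sum_distrib_left by (intro sum.cong refl) auto
    also have "\<dots> = (\<Sum>f\<in>fst \<sigma>. \<Sum>i<m. \<Sum>ys\<in>tuples (fst A) (snd \<sigma> f).
            snd A f ys * snd C f (map hs ys) * (if set ys \<inter> Y i = {} then q i else 0))"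
      by (rule sum.swap)
    also have "\<dots> = (\<Sum>f\<in>fst \<sigma>. \<Sum>ys\<in>tuples (fst A) (snd \<sigma> f). \<Sum>i<m.
            snd A f ys * snd C f (map hs ys) * (if set ys \<inter> Y i = {} then q i else 0))"
      by (intro sum.cong refl) (rule sum.swap)
    also have "\<dots> = (\<Sum>f\<in>fst \<sigma>. \<Sum>ys\<in>tuples (fst A) (snd \<sigma> f). snd A f ys * snd C f (map hs ys) * ?w ys)"
      by (simp only: sum_distrib_left)
    finally show ?thesis .
  qed
  also have "\<dots> \<ge> (\<Sum>f\<in>fst \<sigma>. \<Sum>ys\<in>tuples (fst A) (snd \<sigma> f). snd A f ys * snd C f (map hs ys) * (1 - \<eta> - real r * \<epsilon>f))"
  proof (intro sum_mono mult_left_mono)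
    fix f ys assume f: "f \<in> fst \<sigma>" and ys: "ys \<in> tuples (fst A) (snd \<sigma> f)"
    show "0 \<le> snd A f ys * snd C f (map hs ys)" using Apos Cpos by simp
    have "card (set ys) \<le> r" using ys ar f card_length[of ys] unfolding tuples_def by fastforce
    moreover have "\<forall>a\<in>set ys. (\<Sum>i<m. if a \<in> Y i then q i else 0) \<le> \<epsilon>f" using thin ys unfolding tuples_def by auto
    ultimately show "1 - \<eta> - real r * \<epsilon>f \<le> ?w ys" using weight_avoiding_ge[OF q sq _ _ _ ef] by blast
  qed
  also have "(\<Sum>f\<in>fst \<sigma>. \<Sum>ys\<in>tuples (fst A) (snd \<sigma> f). snd A f ys * snd C f (map hs ys) * (1 - \<eta> - real r * \<epsilon>f))
     = (1 - \<eta> - real r * \<epsilon>f) * sval \<sigma> A C hs"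
    unfolding sval_def sum_distrib_left by (intro sum.cong refl) (simp add: mult.commute)
  finally show ?thesis by (simp add: comp_def)
qed

lemma is_struct_mixture:
  assumes A: "is_struct \<sigma> A" and m: "m > 0" and q: "\<forall>i<m. q i \<in> \<rat> \<and> q i \<ge> 0"
  shows "is_struct \<sigma> (mixture A m Y q)"
proof -
  have fA: "finite (fst A)" "fst A \<noteq> {}" and Apos: "\<And>f xs. 0 \<le> snd A f xs" and AQ: "\<And>f xs. snd A f xs \<in> \<rat>"
    and Asup: "\<And>f xs. snd A f xs \<noteq> 0 \<Longrightarrow> f \<in> fst \<sigma> \<and> xs \<in> tuples (fst A) (snd \<sigma> f)"
    using A unfolding is_struct_def by auto
  show ?thesis unfolding is_struct_def
  proof (intro conjI allI impI)
    show "finite (fst (mixture A m Y q))" using fA unfolding fst_mixture by simp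
    show "fst (mixture A m Y q) \<noteq> {}" using fA m unfolding fst_mixture by auto
    fix f xs
    show "snd (mixture A m Y q) f xs \<in> \<rat>" unfolding snd_mixture using q AQ by (intro Rats_sum) auto
    show "0 \<le> snd (mixture A m Y q) f xs" unfolding snd_mixture using q Apos by (intro sum_nonneg) auto
    assume ne: "snd (mixture A m Y q) f xs \<noteq> 0"
    then obtain i where "i \<in> {..<m}" "(if (\<forall>x\<in>set xs. copy_index x = i) \<and> set (map copy_orig xs) \<inter> Y i = {}
                   then q i * snd A f (map copy_orig xs) else 0) \<noteq> 0"
      unfolding snd_mixture by (rule sum.not_neutral_contains_not_neutral)
    then have i: "i < m" "(\<forall>x\<in>set xs. copy_index x = i)" "snd A f (map copy_orig xs) \<noteq> 0"
      by (auto split: if_splits)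
    then have fs: "f \<in> fst \<sigma>" "map copy_orig xs \<in> tuples (fst A) (snd \<sigma> f)" using Asup by auto
    show "f \<in> fst \<sigma>" using fs by simp
    have "x \<in> fst (mixture A m Y q)" if "x \<in> set xs" for x
    proof -
      have "copy_orig x \<in> fst A" using fs that unfolding tuples_def by auto
      then have "copy_of (copy_index x) (copy_orig x) \<in> fst (mixture A m Y q)" using i that unfolding fst_mixture by auto
      then show ?thesis by (simp add: copy_of_index_orig)
    qed
    then show "xs \<in> tuples (fst (mixture A m Y q)) (snd \<sigma> f)" using fs unfolding tuples_def by auto
  qed
qed

lemma gaifman_mixture_edge:
  assumes A: "is_struct \<sigma> A" and uv: "(u, v) \<in> snd (gaifman (mixture A m Y q))"
    and q: "\<forall>i<m. q i \<ge> 0"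
  shows "\<exists>i<m. copy_index u = i \<and> copy_index v = i \<and> copy_orig u \<notin> Y i \<and> copy_orig v \<notin> Y i \<and> (copy_orig u, copy_orig v) \<in> snd (gaifman A)"
proof -
  have Apos: "\<And>f xs. 0 \<le> snd A f xs" using A unfolding is_struct_def by auto
  obtain f xs where fx: "u \<noteq> v" "snd (mixture A m Y q) f xs > 0" "u \<in> set xs" "v \<in> set xs"
    using uv unfolding gaifman_def by auto
  then obtain i where i: "i < m" "(\<forall>x\<in>set xs. copy_index x = i)" "set (map copy_orig xs) \<inter> Y i = {}" "q i * snd A f (map copy_orig xs) > 0"
    unfolding snd_mixture
  proof -
    have "snd (mixture A m Y q) f xs \<noteq> 0" using fx(2) by simp
    then obtain i where i: "i \<in> {..<m}" "(if (\<forall>x\<in>set xs. copy_index x = i) \<and> set (map copy_orig xs) \<inter> Y i = {}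
                   then q i * snd A f (map copy_orig xs) else 0) \<noteq> 0"
      unfolding snd_mixture by (rule sum.not_neutral_contains_not_neutral)
    have "q i * snd A f (map copy_orig xs) \<ge> 0" using q i(1) Apos by simp
    then show ?thesis using i by (intro that[of i]) (auto split: if_splits)
  qed
  have "q i \<ge> 0" using q i(1) by simp
  then have Ap: "snd A f (map copy_orig xs) > 0" using i(4) by (auto simp: zero_less_mult_iff)
  have "copy_orig u \<noteq> copy_orig v"
  proof
    assume "copy_orig u = copy_orig v"
    then have "copy_of (copy_index u) (copy_orig u) = copy_of (copy_index v) (copy_orig v)" using i fx by simp
    then show False using fx(1) by (simp only: copy_of_index_orig)
  qed
  then have "(copy_orig u, copy_orig v) \<in> snd (gaifman A)" using Ap fx unfolding gaifman_def
    by simp (intro exI[of _ f] exI[of _ "map copy_orig xs"], auto)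
  then show ?thesis using i fx by auto
qed

lemma treewidth_del_verts_iso_le:
  assumes G: "is_graph G" and A: "is_struct \<sigma> A" and phi: "bij_betw \<phi> (fst A) (fst G)"
    and iso: "\<forall>u\<in>fst A. \<forall>v\<in>fst A. (u, v) \<in> snd (gaifman A) \<longleftrightarrow> (\<phi> u, \<phi> v) \<in> snd G"
  shows "treewidth (del_verts (gaifman A) {a\<in>fst A. \<phi> a \<in> X}) \<le> treewidth (del_verts G X)"
proof (rule treewidth_le_if_embedding)
  show "finite_graph (del_verts (gaifman A) {a \<in> fst A. \<phi> a \<in> X})" by (rule finite_graph_del_verts[OF finite_graph_gaifman[OF A]])
  show "finite_graph (del_verts G X)" by (rule finite_graph_del_verts[OF is_graph_imp_finite_graph[OF G]])
  show "inj_on \<phi> (fst (del_verts (gaifman A) {a \<in> fst A. \<phi> a \<in> X}))"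
    using phi unfolding bij_betw_def del_verts_def gaifman_def by (auto intro: inj_on_subset)
  show "\<phi> ` fst (del_verts (gaifman A) {a \<in> fst A. \<phi> a \<in> X}) \<subseteq> fst (del_verts G X)"
    using phi unfolding bij_betw_def del_verts_def gaifman_def by auto
  show "(\<phi> u, \<phi> v) \<in> snd (del_verts G X)"
    if "(u, v) \<in> snd (del_verts (gaifman A) {a \<in> fst A. \<phi> a \<in> X})" for u v
  proof -
    have uv: "(u, v) \<in> snd (gaifman A)" "u \<in> fst A" "v \<in> fst A" "\<phi> u \<notin> X" "\<phi> v \<notin> X"
      using that unfolding del_verts_def by (auto simp: gaifman_def)
    then have "(\<phi> u, \<phi> v) \<in> snd G" using iso by blast
    moreover have "\<phi> u \<in> fst G" "\<phi> v \<in> fst G" using phi uv unfolding bij_betw_def by auto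
    ultimately show ?thesis using uv unfolding del_verts_def by auto
  qed
qed

lemma treewidth_mixture_copy_le:
  fixes Y :: "nat \<Rightarrow> nat set"
  assumes A: "is_struct \<sigma> A" and q: "\<forall>i<m. q i \<in> \<rat> \<and> q i \<ge> 0" and i: "i < m"
  defines "S \<equiv> {v \<in> fst (mixture A m Y q). copy_index v = i \<and> copy_orig v \<notin> Y i}"
  shows "treewidth (induced (gaifman (mixture A m Y q)) S) \<le> treewidth (del_verts (gaifman A) (Y i))"
proof -
  let ?K = "gaifman (mixture A m Y q)"
  have m: "m > 0" using i by simp
  have K: "finite_graph ?K" by (rule finite_graph_gaifman[OF is_struct_mixture[OF A m q]])
  have GA: "finite_graph (gaifman A)" by (rule finite_graph_gaifman[OF A])
  have q0: "\<forall>i<m. q i \<ge> 0" using q by simp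
  show ?thesis
  proof (rule treewidth_le_if_embedding)
    show "finite_graph (induced ?K S)" using finite_graph_induced[OF K] unfolding S_def gaifman_def by auto
    show "finite_graph (del_verts (gaifman A) (Y i))" by (rule finite_graph_del_verts[OF GA])
    show "inj_on copy_orig (fst (induced ?K S))"
    proof (rule inj_onI)
      fix u v assume "u \<in> fst (induced ?K S)" "v \<in> fst (induced ?K S)" "copy_orig u = copy_orig v"
      then have "copy_of (copy_index u) (copy_orig u) = copy_of (copy_index v) (copy_orig v)"
        unfolding induced_def S_def by auto
      then show "u = v" by (simp only: copy_of_index_orig)
    qed
    show "copy_orig ` fst (induced ?K S) \<subseteq> fst (del_verts (gaifman A) (Y i))"
      unfolding induced_def S_def del_verts_def gaifman_def fst_mixture by auto
    show "(copy_orig u, copy_orig v) \<in> snd (del_verts (gaifman A) (Y i))" if uv: "(u, v) \<in> snd (induced ?K S)" for u v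
    proof -
      have "(u, v) \<in> snd ?K" "copy_orig u \<notin> Y i" "copy_orig v \<notin> Y i" using uv unfolding induced_def S_def by auto
      moreover have "(copy_orig u, copy_orig v) \<in> snd (gaifman A)" using gaifman_mixture_edge[OF A calculation(1) q0] by blast
      moreover have "copy_orig u \<in> fst A" "copy_orig v \<in> fst A" using calculation(4) GA unfolding finite_graph_def gaifman_def by auto
      ultimately show ?thesis unfolding del_verts_def gaifman_def by auto
    qed
  qed
qed

lemma treewidth_gaifman_mixture_le:
  assumes A: "is_struct \<sigma> A" and m: "m > 0" and q: "\<forall>i<m. q i \<in> \<rat> \<and> q i \<ge> 0"
    and tw: "\<forall>i<m. treewidth (del_verts (gaifman A) (Y i)) \<le> k"
  shows "treewidth (gaifman (mixture A m Y q)) \<le> k"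
proof -
  let ?K = "gaifman (mixture A m Y q)"
  have K: "finite_graph ?K" by (rule finite_graph_gaifman[OF is_struct_mixture[OF A m q]])
  have q0: "\<forall>i<m. q i \<ge> 0" using q by simp
  \<comment> \<open>the components are the copies, minus the deleted vertices, which are isolated\<close>
  define lab where "lab x = (if copy_orig x \<in> Y (copy_index x) then (1::nat, x) else (0, copy_index x))" for x
  show ?thesis
  proof (rule treewidth_le_if_parts[OF _ K subset_refl])
    show "finite (lab ` fst ?K)" using K unfolding finite_graph_def by simp
    show "lab u = lab v" if "(u, v) \<in> snd ?K" for u v
      using gaifman_mixture_edge[OF A that q0] unfolding lab_def by auto
    show "treewidth (induced ?K {v \<in> fst ?K. lab v = j}) \<le> k" if j: "j \<in> lab ` fst ?K" for j
    proof -
      obtain x where x: "x \<in> fst ?K" "j = lab x" using j by auto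
      have Kj: "finite_graph (induced ?K {v \<in> fst ?K. lab v = j})" by (rule finite_graph_induced[OF K]) auto
      show ?thesis
      proof (cases "copy_orig x \<in> Y (copy_index x)")
        case True
        then have "{v \<in> fst ?K. lab v = j} \<subseteq> {x}" using x unfolding lab_def by (auto split: if_splits)
        then have "card {v \<in> fst ?K. lab v = j} \<le> 1" using card_mono[of "{x}"] by fastforce
        then show ?thesis using Kj by (intro treewidth_le_card) (auto simp: induced_def)
      next
        case False
        have i: "copy_index x < m" using x(1) unfolding gaifman_def fst_mixture by auto
        have "{v \<in> fst ?K. lab v = j}
            = {v \<in> fst (mixture A m Y q). copy_index v = copy_index x \<and> copy_orig v \<notin> Y (copy_index x)}"
          using x False unfolding lab_def gaifman_def by auto
        then have "treewidth (induced ?K {v \<in> fst ?K. lab v = j}) \<le> treewidth (del_verts (gaifman A) (Y (copy_index x)))"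
          using treewidth_mixture_copy_le[OF A q i] by simp
        then show ?thesis using tw i by (meson order_trans)
      qed
    qed
  qed
qed

lemma rational_approx_below:
  fixes p :: real and d :: real
  assumes "p \<ge> 0" "d > 0"
  shows "\<exists>q. q \<in> \<rat> \<and> 0 \<le> q \<and> q \<le> p \<and> p - d \<le> q"
proof (cases "p \<le> d")
  case True then show ?thesis using assms by (intro exI[of _ 0]) auto
next
  case False
  then obtain q where "q \<in> \<rat>" "p - d < q" "q < p" using Rats_dense_in_real[of "p - d" p] assms by auto
  then show ?thesis using False by (intro exI[of _ q]) auto
qed

lemma rational_weights_of_pmf:
  fixes \<pi> :: "'a pmf"
  assumes fin: "finite (set_pmf \<pi>)" and \<eta>: "\<eta> > 0"
  obtains m :: nat and X :: "nat \<Rightarrow> 'a" and q :: "nat \<Rightarrow> real"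
  where "m > 0" "\<forall>i<m. X i \<in> set_pmf \<pi>" "\<forall>i<m. q i \<in> \<rat> \<and> 0 \<le> q i"
    "(\<Sum>i<m. q i) \<le> 1" "1 - \<eta> \<le> (\<Sum>i<m. q i)"
    "\<forall>P. (\<Sum>i<m. if P (X i) then q i else 0) \<le> measure_pmf.prob \<pi> {x. P x}"
proof -
  define m where "m = card (set_pmf \<pi>)"
  have m: "m > 0" unfolding m_def using fin set_pmf_not_empty by (simp add: card_gt_0_iff)
  obtain X where X: "bij_betw X {..<m} (set_pmf \<pi>)"
    unfolding m_def using ex_bij_betw_nat_finite[OF fin] by (auto simp: atLeast0LessThan)
  define p where "p i = pmf \<pi> (X i)" for i
  have sump: "(\<Sum>i<m. p i) = 1"
    unfolding p_def using sum.reindex_bij_betw[OF X, of "pmf \<pi>"] fin by (simp add: sum_pmf_eq_1)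
  have thin: "(\<Sum>i<m. if P (X i) then p i else 0) = measure_pmf.prob \<pi> {x. P x}" for P
  proof -
    have "(\<Sum>i<m. if P (X i) then p i else 0) = (\<Sum>x\<in>set_pmf \<pi>. if P x then pmf \<pi> x else 0)"
      unfolding p_def by (rule sum.reindex_bij_betw[OF X])
    also have "\<dots> = measure_pmf.prob \<pi> (set_pmf \<pi> \<inter> {x. P x})"
      using fin by (simp add: sum.inter_restrict measure_measure_pmf_finite)
    also have "\<dots> = measure_pmf.prob \<pi> {x. P x}"
      using measure_Int_set_pmf[of \<pi> "{x. P x}"] by (simp add: Int_commute)
    finally show ?thesis .
  qed
  \<comment> \<open>structures must have rational values, so the probabilities are rounded down\<close>
  have "\<forall>i. \<exists>q. q \<in> \<rat> \<and> 0 \<le> q \<and> q \<le> p i \<and> p i - \<eta> / m \<le> q"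
    using rational_approx_below[of "p _" "\<eta> / m"] m \<eta> unfolding p_def by (auto simp: pmf_nonneg)
  then obtain q where q: "\<And>i. q i \<in> \<rat> \<and> 0 \<le> q i \<and> q i \<le> p i \<and> p i - \<eta> / m \<le> q i" by metis
  show ?thesis
  proof (rule that[OF m])
    show "\<forall>i<m. X i \<in> set_pmf \<pi>" using X by (auto simp: bij_betw_def)
    show "\<forall>i<m. q i \<in> \<rat> \<and> 0 \<le> q i" using q by auto
    show "(\<Sum>i<m. q i) \<le> 1" using sum_mono[of "{..<m}" q p] q sump by auto
    have "(\<Sum>i<m. p i - \<eta> / m) = 1 - \<eta>" using sump m by (simp add: sum_subtractf)
    then show "1 - \<eta> \<le> (\<Sum>i<m. q i)" using sum_mono[of "{..<m}" "\<lambda>i. p i - \<eta> / m" q] q by auto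
    show "\<forall>P. (\<Sum>i<m. if P (X i) then q i else 0) \<le> measure_pmf.prob \<pi> {x. P x}"
      using sum_mono[of "{..<m}" "\<lambda>i. if P (X i) then q i else 0" "\<lambda>i. if P (X i) then p i else 0" for P] q thin
      by (smt (verit, ccfv_SIG))
  qed
qed

lemma d_opt_mixture_le:
  assumes A: "is_struct \<sigma> A" and ar: "\<forall>f\<in>fst \<sigma>. snd \<sigma> f \<le> r"
    and m: "m > 0" and q: "\<forall>i<m. q i \<in> \<rat> \<and> 0 \<le> q i" "(\<Sum>i<m. q i) \<le> 1" "1 - \<eta> \<le> (\<Sum>i<m. q i)"
    and thin: "\<forall>a\<in>fst A. (\<Sum>i<m. if a \<in> Y i then q i else 0) \<le> \<epsilon>f" "\<epsilon>f \<ge> 0"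
    and \<rho>: "0 \<le> \<rho>" "\<rho> < 1" "\<eta> + real r * \<epsilon>f \<le> \<rho>"
  shows "d_opt \<sigma> A (mixture A m Y q) \<le> ereal (- ln (1 - \<rho>))"
proof (rule d_opt_le_if_sopt_sandwiched[OF \<rho>(1,2)])
  let ?B = "mixture A m Y q"
  have B: "is_struct \<sigma> ?B" using is_struct_mixture[OF A m] q(1) by auto
  have q0: "\<forall>i<m. 0 \<le> q i" using q(1) by auto
  fix C assume C: "is_struct \<sigma> C"
  show "0 \<le> sopt \<sigma> ?B C" by (rule sopt_nonneg[OF B C])
  have fin: "finite (fst A)" "finite (fst ?B)" "finite (fst C)" "fst C \<noteq> {}"
    using A B C unfolding is_struct_def by auto
  obtain h where h: "\<forall>x\<in>fst ?B. h x \<in> fst C" "sopt \<sigma> ?B C = sval \<sigma> ?B C h"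
    using sopt_attained[OF fin(2-4)] by blast
  show "sopt \<sigma> ?B C \<le> sopt \<sigma> A C"
    using h sval_mixture_le_sopt[OF A C q0 q(2)] by simp
  obtain g where g: "\<forall>x\<in>fst A. g x \<in> fst C" "sopt \<sigma> A C = sval \<sigma> A C g"
    using sopt_attained[OF fin(1,3,4)] by blast
  have gB: "\<forall>x\<in>fst ?B. (g \<circ> copy_orig) x \<in> fst C" using g(1) unfolding fst_mixture by auto
  have "(1 - \<rho>) * sopt \<sigma> A C \<le> (1 - \<eta> - real r * \<epsilon>f) * sopt \<sigma> A C"
    using sopt_nonneg[OF A C] \<rho>(3) by (intro mult_right_mono) auto
  also have "\<dots> \<le> sval \<sigma> ?B C (g \<circ> copy_orig)"
    using sval_mixture_ge[OF A C ar q0 q(3) thin] g(2) by simp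
  also have "\<dots> \<le> sopt \<sigma> ?B C" by (rule sval_le_sopt[OF fin(2,3) gB])
  finally show "(1 - \<rho>) * sopt \<sigma> A C \<le> sopt \<sigma> ?B C" .
qed

lemma approx_by_mixture_of_thin_distribution:
  fixes \<pi> :: "nat set pmf" and r :: nat
  assumes A: "is_struct \<sigma> A" and ar: "\<forall>f\<in>fst \<sigma>. snd \<sigma> f \<le> r"
    and G: "is_graph G" and iso: "graph_iso (gaifman A) G"
    and supp: "set_pmf \<pi> \<subseteq> {X. X \<subseteq> fst G \<and> treewidth (del_verts G X) \<le> k}"
    and thin: "\<forall>v\<in>fst G. measure_pmf.prob \<pi> {X. v \<in> X} \<le> \<epsilon>f"
    and \<rho>: "0 < \<rho>" "\<rho> < 1" and \<epsilon>f: "\<epsilon>f \<ge> 0" "real r * \<epsilon>f \<le> \<rho> / 2"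
  shows "\<exists>B. is_struct \<sigma> B \<and> treewidth (gaifman B) \<le> k \<and> d_opt \<sigma> A B \<le> ereal (- ln (1 - \<rho>))"
proof -
  obtain \<phi> where \<phi>: "bij_betw \<phi> (fst A) (fst G)"
    and \<phi>E: "\<forall>u\<in>fst A. \<forall>v\<in>fst A. (u, v) \<in> snd (gaifman A) \<longleftrightarrow> (\<phi> u, \<phi> v) \<in> snd G"
    using iso unfolding graph_iso_def by (auto simp: gaifman_def)
  have "set_pmf \<pi> \<subseteq> Pow (fst G)" using supp by auto
  then have fin: "finite (set_pmf \<pi>)" using G unfolding is_graph_def by (meson finite_Pow_iff finite_subset)
  have \<eta>: "\<rho> / 2 > 0" using \<rho> by simp
  obtain m :: nat and X q where m: "m > 0" and X: "\<forall>i<m. X i \<in> set_pmf \<pi>"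
    and q: "\<forall>i<m. q i \<in> \<rat> \<and> 0 \<le> q i" "(\<Sum>i<m. q i) \<le> 1" "1 - \<rho> / 2 \<le> (\<Sum>i<m. q i)"
    and qX: "\<forall>P. (\<Sum>i<m. if P (X i) then q i else 0) \<le> measure_pmf.prob \<pi> {x. P x}"
    by (rule rational_weights_of_pmf[OF fin \<eta>])
  define Y where "Y i = {a\<in>fst A. \<phi> a \<in> X i}" for i
  have "\<forall>a\<in>fst A. (\<Sum>i<m. if a \<in> Y i then q i else 0) \<le> \<epsilon>f"
  proof
    fix a assume a: "a \<in> fst A"
    then have "(\<Sum>i<m. if a \<in> Y i then q i else 0) \<le> measure_pmf.prob \<pi> {x. \<phi> a \<in> x}"
      using qX[rule_format, of "\<lambda>x. \<phi> a \<in> x"] unfolding Y_def by simp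
    moreover have "\<phi> a \<in> fst G" using \<phi> a by (auto simp: bij_betw_def)
    ultimately show "(\<Sum>i<m. if a \<in> Y i then q i else 0) \<le> \<epsilon>f"
      using order_trans[OF _ thin[rule_format]] by blast
  qed
  then have "d_opt \<sigma> A (mixture A m Y q) \<le> ereal (- ln (1 - \<rho>))"
    using d_opt_mixture_le[OF A ar m q] \<rho> \<epsilon>f by simp
  moreover have "treewidth (gaifman (mixture A m Y q)) \<le> k"
  proof (rule treewidth_gaifman_mixture_le[OF A m q(1)])
    show "\<forall>i<m. treewidth (del_verts (gaifman A) (Y i)) \<le> k"
    proof (intro allI impI)
      fix i assume "i < m"
      then have "treewidth (del_verts G (X i)) \<le> k" using X supp by auto
      then show "treewidth (del_verts (gaifman A) (Y i)) \<le> k"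
        unfolding Y_def using treewidth_del_verts_iso_le[OF G A \<phi> \<phi>E, of "X i"] by linarith
    qed
  qed
  moreover have "is_struct \<sigma> (mixture A m Y q)" using is_struct_mixture[OF A m] q(1) by auto
  ultimately show ?thesis by blast
qed

lemma frac_tw_fragile_imp_tw_pliable:
  fixes \<G> :: "graph set" and r :: nat
  assumes graphs: "\<forall>G\<in>\<G>. is_graph G" and frag: "frac_tw_fragile \<G>"
  shows "tw_pliable (A_class \<G> r)"
  unfolding tw_pliable_def
proof (intro allI impI)
  fix \<epsilon> :: real assume \<epsilon>: "\<epsilon> > 0"
  define \<rho> where "\<rho> = 1 - exp (- \<epsilon>)"
  have \<rho>: "0 < \<rho>" "\<rho> < 1" "- ln (1 - \<rho>) = \<epsilon>" unfolding \<rho>_def using \<epsilon> by auto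
  define \<epsilon>f where "\<epsilon>f = \<rho> / (2 * real r + 1)"
  have \<epsilon>f: "\<epsilon>f > 0" "real r * \<epsilon>f \<le> \<rho> / 2" unfolding \<epsilon>f_def using \<rho> by (auto simp: field_simps)
  obtain k where k: "\<forall>G\<in>\<G>. \<exists>\<pi> :: nat set pmf.
      set_pmf \<pi> \<subseteq> {X. X \<subseteq> fst G \<and> treewidth (del_verts G X) \<le> k}
    \<and> (\<forall>v\<in>fst G. measure_pmf.prob \<pi> {X. v \<in> X} \<le> \<epsilon>f)"
    using frag \<epsilon>f unfolding frac_tw_fragile_def by blast
  have "\<exists>B. is_struct \<sigma> B \<and> treewidth (gaifman B) \<le> k \<and> d_opt \<sigma> A B \<le> ereal \<epsilon>"
    if "(\<sigma>, A) \<in> A_class \<G> r" for \<sigma> A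
  proof -
    have "\<exists>G\<in>\<G>. graph_iso (gaifman A) G" "is_struct \<sigma> A" "\<forall>f\<in>fst \<sigma>. snd \<sigma> f \<le> r"
      using that unfolding A_class_def by auto
    then obtain G where G: "G \<in> \<G>" "graph_iso (gaifman A) G" and A: "is_struct \<sigma> A" "\<forall>f\<in>fst \<sigma>. snd \<sigma> f \<le> r"
      by blast
    obtain \<pi> :: "nat set pmf" where "set_pmf \<pi> \<subseteq> {X. X \<subseteq> fst G \<and> treewidth (del_verts G X) \<le> k}"
      "\<forall>v\<in>fst G. measure_pmf.prob \<pi> {X. v \<in> X} \<le> \<epsilon>f"
      using k G(1) by blast
    from approx_by_mixture_of_thin_distribution[OF A graphs[rule_format, OF G(1)] G(2) this \<rho>(1,2)] \<epsilon>f
    show ?thesis unfolding \<rho>(3) by simp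
  qed
  then show "\<exists>k. \<forall>(\<sigma>, \<A>)\<in>A_class \<G> r. \<exists>\<B>. is_struct \<sigma> \<B> \<and> treewidth (gaifman \<B>) \<le> k \<and> d_opt \<sigma> \<A> \<B> \<le> ereal \<epsilon>"
    by blast
qed

section \<open>Multiplicative weights\<close>

text \<open>Vertex v carries weight (1 + \<eta>) ^ c v, where c counts how often v was hit by the sets
  chosen so far.\<close>
definition mwu_counts :: "((nat \<Rightarrow> nat) \<Rightarrow> nat set) \<Rightarrow> nat \<Rightarrow> nat \<Rightarrow> nat" where
  "mwu_counts ch T = ((\<lambda>c v. c v + (if v \<in> ch c then 1 else 0)) ^^ T) (\<lambda>_. 0)"

lemma mwu_counts_0 [simp]: "mwu_counts ch 0 v = 0"
  unfolding mwu_counts_def by simp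

lemma mwu_counts_Suc [simp]:
  "mwu_counts ch (Suc T) v = mwu_counts ch T v + (if v \<in> ch (mwu_counts ch T) then 1 else 0)"
  unfolding mwu_counts_def by simp

lemma mwu_counts_eq_card: "mwu_counts ch T v = card {t\<in>{..<T}. v \<in> ch (mwu_counts ch t)}"
proof (induction T)
  case (Suc T)
  have "{t\<in>{..<Suc T}. v \<in> ch (mwu_counts ch t)} =
        {t\<in>{..<T}. v \<in> ch (mwu_counts ch t)} \<union> (if v \<in> ch (mwu_counts ch T) then {T} else {})"
    by (auto simp: less_Suc_eq)
  then show ?case using Suc by (auto simp: card_insert_if)
qed simp

lemma mwu_potential_bound:
  fixes \<eta> \<delta> :: real
  assumes fV: "finite V" and \<eta>: "\<eta> > 0" and \<delta>: "\<delta> \<ge> 0"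
    and light: "\<And>c. (\<Sum>v\<in>V \<inter> ch c. (1 + \<eta>) ^ c v) \<le> \<delta> * (\<Sum>v\<in>V. (1 + \<eta>) ^ c v)"
  shows "(\<Sum>v\<in>V. (1 + \<eta>) ^ mwu_counts ch T v) \<le> real (card V) * (1 + \<eta> * \<delta>) ^ T"
proof (induction T)
  case (Suc T)
  let ?c = "mwu_counts ch T"
  have hit: "(\<Sum>v\<in>V. if v \<in> ch ?c then \<eta> * (1 + \<eta>) ^ ?c v else 0) = \<eta> * (\<Sum>v\<in>V \<inter> ch ?c. (1 + \<eta>) ^ ?c v)"
    using fV by (simp add: sum.inter_restrict sum_distrib_left) (intro sum.cong refl, auto)
  have "(\<Sum>v\<in>V. (1 + \<eta>) ^ mwu_counts ch (Suc T) v)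
      = (\<Sum>v\<in>V. (1 + \<eta>) ^ ?c v + (if v \<in> ch ?c then \<eta> * (1 + \<eta>) ^ ?c v else 0))"
    by (intro sum.cong) (auto simp: algebra_simps)
  also have "\<dots> = (\<Sum>v\<in>V. (1 + \<eta>) ^ ?c v) + \<eta> * (\<Sum>v\<in>V \<inter> ch ?c. (1 + \<eta>) ^ ?c v)"
    unfolding sum.distrib hit ..
  also have "\<dots> \<le> (1 + \<eta> * \<delta>) * (\<Sum>v\<in>V. (1 + \<eta>) ^ ?c v)"
    using mult_left_mono[OF light[of ?c], of \<eta>] \<eta> by (simp add: algebra_simps)
  also have "\<dots> \<le> (1 + \<eta> * \<delta>) * (real (card V) * (1 + \<eta> * \<delta>) ^ T)"
    using Suc \<eta> \<delta> by (intro mult_left_mono) auto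
  finally show ?case by (simp add: algebra_simps)
qed simp

lemma mwu_counts_bound:
  fixes \<eta> \<delta> :: real
  assumes fV: "finite V" and v: "v \<in> V" and \<eta>: "0 < \<eta>" "\<eta> < 1" and \<delta>: "\<delta> \<ge> 0"
    and light: "\<And>c. (\<Sum>v\<in>V \<inter> ch c. (1 + \<eta>) ^ c v) \<le> \<delta> * (\<Sum>v\<in>V. (1 + \<eta>) ^ c v)"
  shows "real (mwu_counts ch T v) * (\<eta> - \<eta>\<^sup>2) \<le> ln (card V) + real T * \<eta> * \<delta>"
proof -
  let ?a = "real (mwu_counts ch T v)"
  have "card V > 0" using fV v by (auto simp: card_gt_0_iff)
  then have n: "real (card V) \<ge> 1" by simp
  have p: "0 < 1 + \<eta> * \<delta>" using \<eta> \<delta> by (smt (verit) mult_nonneg_nonneg)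
  have "(1 + \<eta>) ^ mwu_counts ch T v \<le> (\<Sum>u\<in>V. (1 + \<eta>) ^ mwu_counts ch T u)"
    using fV v \<eta> by (intro member_le_sum) auto
  also have "\<dots> \<le> real (card V) * (1 + \<eta> * \<delta>) ^ T" by (rule mwu_potential_bound[OF fV \<eta>(1) \<delta> light])
  finally have "ln ((1 + \<eta>) ^ mwu_counts ch T v) \<le> ln (real (card V) * (1 + \<eta> * \<delta>) ^ T)"
    using \<eta> n p by (subst ln_le_cancel_iff) auto
  then have "?a * ln (1 + \<eta>) \<le> ln (card V) + real T * ln (1 + \<eta> * \<delta>)"
    using \<eta> n p by (simp add: ln_mult ln_realpow)
  moreover have "real T * ln (1 + \<eta> * \<delta>) \<le> real T * (\<eta> * \<delta>)"
    using \<eta> \<delta> by (intro mult_left_mono ln_add_one_self_le_self) auto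
  moreover have "?a * (\<eta> - \<eta>\<^sup>2) \<le> ?a * ln (1 + \<eta>)"
    using \<eta> by (intro mult_left_mono ln_one_plus_pos_lower_bound) auto
  ultimately show ?thesis by (simp add: algebra_simps)
qed

lemma mwu_counts_arith:
  fixes a T \<eta> \<delta> \<gamma> L :: real
  assumes "a * (\<eta> - \<eta>\<^sup>2) \<le> L + T * \<eta> * \<delta>" "L \<le> T * \<eta> * \<gamma> / 2"
    and "\<eta> * (\<delta> + \<gamma>) \<le> \<gamma> / 2" "0 < \<eta>" "\<eta> < 1" "T \<ge> 0"
  shows "a \<le> T * (\<delta> + \<gamma>)"
proof (rule ccontr)
  assume "\<not> a \<le> T * (\<delta> + \<gamma>)"
  moreover have "\<eta> - \<eta>\<^sup>2 > 0" using assms(4,5) by (simp add: power2_eq_square)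
  ultimately have "T * (\<delta> + \<gamma>) * (\<eta> - \<eta>\<^sup>2) < a * (\<eta> - \<eta>\<^sup>2)" by simp
  moreover have "(T * \<eta>) * (\<eta> * (\<delta> + \<gamma>)) \<le> (T * \<eta>) * (\<gamma> / 2)"
    using assms(3-6) by (intro mult_left_mono) auto
  ultimately show False using assms(1,2) by (simp add: algebra_simps power2_eq_square)
qed

lemma thin_distribution_of_oracle:
  fixes V :: "nat set" and XS :: "nat set set" and \<delta> \<gamma> :: real
  assumes fV: "finite V" and Vne: "V \<noteq> {}" and \<delta>: "\<delta> \<ge> 0" and \<gamma>: "\<gamma> > 0"
    and light_set: "\<And>w. \<forall>v\<in>V. w v \<in> \<rat> \<and> w v > 0 \<Longrightarrow> \<exists>X\<in>XS. (\<Sum>v\<in>V \<inter> X. w v) \<le> \<delta> * (\<Sum>v\<in>V. w v)"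
  shows "\<exists>\<pi> :: nat set pmf. set_pmf \<pi> \<subseteq> XS \<and> (\<forall>v\<in>V. measure_pmf.prob \<pi> {X. v \<in> X} \<le> \<delta> + \<gamma>)"
proof -
  obtain N :: nat where N: "N \<ge> 2" "real N \<ge> 2 * (\<delta> + \<gamma>) / \<gamma>"
    by (meson le_cases nat_le_real_less not_le order_trans of_nat_le_iff real_arch_simple)
  \<comment> \<open>a rational learning rate keeps the weights (1 + \<eta>) ^ c v rational\<close>
  define \<eta> :: real where "\<eta> = 1 / real N"
  have \<eta>: "0 < \<eta>" "\<eta> < 1" "\<eta> \<in> \<rat>" unfolding \<eta>_def using N by auto
  have \<eta>_small: "\<eta> * (\<delta> + \<gamma>) \<le> \<gamma> / 2"
    using N \<gamma> \<delta> unfolding \<eta>_def by (simp add: field_simps)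
  define ch where "ch c = (SOME X. X \<in> XS \<and> (\<Sum>v\<in>V \<inter> X. (1 + \<eta>) ^ c v) \<le> \<delta> * (\<Sum>v\<in>V. (1 + \<eta>) ^ c v))"
    for c :: "nat \<Rightarrow> nat"
  have ch: "ch c \<in> XS \<and> (\<Sum>v\<in>V \<inter> ch c. (1 + \<eta>) ^ c v) \<le> \<delta> * (\<Sum>v\<in>V. (1 + \<eta>) ^ c v)" for c
    unfolding ch_def by (rule someI_ex) (use light_set[of "\<lambda>v. (1 + \<eta>) ^ c v"] \<eta> in auto)
  obtain T :: nat where T: "T \<ge> 1" "real T \<ge> 2 * ln (card V) / (\<eta> * \<gamma>)"
    by (meson le_cases nat_le_real_less not_le order_trans of_nat_le_iff one_le_numeral real_arch_simple)
  have ln_small: "ln (card V) \<le> real T * \<eta> * \<gamma> / 2"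
    using T(2) \<eta> \<gamma> by (simp add: field_simps)
  define \<pi> where "\<pi> = map_pmf (\<lambda>t. ch (mwu_counts ch t)) (pmf_of_set {..<T})"
  have Tne: "{..<T} \<noteq> {}" using T by (simp add: lessThan_empty_iff)
  have "measure_pmf.prob \<pi> {X. v \<in> X} \<le> \<delta> + \<gamma>" if v: "v \<in> V" for v
  proof -
    have "real (mwu_counts ch T v) \<le> real T * (\<delta> + \<gamma>)"
      using mwu_counts_bound[OF fV v \<eta>(1,2) \<delta>] ch ln_small \<eta>_small \<eta>
      by (intro mwu_counts_arith) auto
    moreover have "measure_pmf.prob \<pi> {X. v \<in> X} = real (mwu_counts ch T v) / real T"
      unfolding \<pi>_def mwu_counts_eq_card[of ch T v] using Tne
      by (simp add: measure_pmf_of_set vimage_def Int_def conj_commute)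
    ultimately show ?thesis using T(1) by (simp add: divide_le_eq mult.commute)
  qed
  moreover have "set_pmf \<pi> \<subseteq> XS" unfolding \<pi>_def using Tne ch by auto
  ultimately show ?thesis by blast
qed

section \<open>Pliability implies fractional fragility\<close>

definition support_struct :: "vstruct \<Rightarrow> vstruct" where
  "support_struct A = (fst A, \<lambda>f ys. if snd A f ys > 0 then 1 else 0)"

definition common_support :: "vstruct \<Rightarrow> vstruct \<Rightarrow> (nat \<Rightarrow> nat) \<Rightarrow> vstruct" where
  "common_support A B h = (fst B, \<lambda>f ys. if snd B f ys > 0 \<and> snd A f (map h ys) > 0 then 1 else 0)"

definition total_weight :: "signature \<Rightarrow> vstruct \<Rightarrow> real" where
  "total_weight \<sigma> A = (\<Sum>f\<in>fst \<sigma>. \<Sum>xs\<in>tuples (fst A) (snd \<sigma> f). snd A f xs)"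

lemma is_struct_support_struct: "is_struct \<sigma> A \<Longrightarrow> is_struct \<sigma> (support_struct A)"
  unfolding is_struct_def support_struct_def by (auto simp: less_le)

lemma is_struct_common_support: "is_struct \<sigma> B \<Longrightarrow> is_struct \<sigma> (common_support A B h)"
  unfolding is_struct_def common_support_def by (auto simp: less_le)

text \<open>Test A and B first against the support of A, and then against the part of the support of B
  that the resulting map h pulls back into the support of A.\<close>
lemma d_opt_small_imp_round_trip:
  assumes A: "is_struct \<sigma> A" and B: "is_struct \<sigma> B" and d: "d_opt \<sigma> A B \<le> ereal \<epsilon>"
    and S: "total_weight \<sigma> A > 0"
  obtains g h where "\<forall>x\<in>fst A. g x \<in> fst B" "\<forall>y\<in>fst B. h y \<in> fst A"
    "(\<Sum>f\<in>fst \<sigma>. \<Sum>xs\<in>tuples (fst A) (snd \<sigma> f).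
        snd A f xs * (if snd B f (map g xs) > 0 \<and> snd A f (map h (map g xs)) > 0 then 1 else 0))
     \<ge> exp (- 2 * \<epsilon>) * total_weight \<sigma> A"
proof -
  have fin: "finite (fst A)" "fst A \<noteq> {}" "finite (fst B)" "fst B \<noteq> {}"
    using A B unfolding is_struct_def by auto
  have Apos: "\<And>f xs. 0 \<le> snd A f xs" and Bpos: "\<And>f xs. 0 \<le> snd B f xs"
    using A B unfolding is_struct_def by auto
  let ?Cs = "support_struct A"
  have Cs: "is_struct \<sigma> ?Cs" by (rule is_struct_support_struct[OF A])
  have "sval \<sigma> A ?Cs id = total_weight \<sigma> A"
    unfolding sval_def total_weight_def support_struct_def using Apos
    by (intro sum.cong refl) (auto simp: less_le)
  moreover have "sval \<sigma> A ?Cs id \<le> sopt \<sigma> A ?Cs"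
    by (rule sval_le_sopt) (use fin in \<open>auto simp: support_struct_def\<close>)
  ultimately have oA: "sopt \<sigma> A ?Cs \<ge> total_weight \<sigma> A" by simp
  have oB: "sopt \<sigma> B ?Cs \<ge> exp (- \<epsilon>) * sopt \<sigma> A ?Cs"
    using sopt_ge_if_d_opt_le[OF A B Cs d] oA S by simp
  have "fst ?Cs = fst A" by (simp add: support_struct_def)
  then obtain h where h: "\<forall>y\<in>fst B. h y \<in> fst A" "sopt \<sigma> B ?Cs = sval \<sigma> B ?Cs h"
    using sopt_attained[of B ?Cs] fin by metis
  let ?Ch = "common_support A B h"
  have Ch: "is_struct \<sigma> ?Ch" by (rule is_struct_common_support[OF B])
  have "sval \<sigma> B ?Ch id = sval \<sigma> B ?Cs h"
    unfolding sval_def common_support_def support_struct_def using Bpos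
    by (intro sum.cong refl) (auto simp: less_le)
  moreover have "sval \<sigma> B ?Ch id \<le> sopt \<sigma> B ?Ch"
    by (rule sval_le_sopt) (use fin in \<open>auto simp: common_support_def\<close>)
  ultimately have oBh: "sopt \<sigma> B ?Ch \<ge> exp (- \<epsilon>) * total_weight \<sigma> A"
    using h(2) oB oA by (smt (verit) exp_gt_zero mult_left_mono)
  then have "sopt \<sigma> B ?Ch > 0" using S by (smt (verit) exp_gt_zero mult_pos_pos)
  then have oAh: "sopt \<sigma> A ?Ch \<ge> exp (- \<epsilon>) * sopt \<sigma> B ?Ch"
    using sopt_ge_if_d_opt_le[OF B A Ch] d d_opt_commute by metis
  have "fst ?Ch = fst B" by (simp add: common_support_def)
  then obtain g where g: "\<forall>x\<in>fst A. g x \<in> fst B" "sopt \<sigma> A ?Ch = sval \<sigma> A ?Ch g"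
    using sopt_attained[of A ?Ch] fin by metis
  have "exp (- 2 * \<epsilon>) * total_weight \<sigma> A = exp (- \<epsilon>) * (exp (- \<epsilon>) * total_weight \<sigma> A)"
    by (simp add: exp_add[symmetric])
  also have "\<dots> \<le> exp (- \<epsilon>) * sopt \<sigma> B ?Ch" using oBh by (simp add: mult_left_mono)
  also have "\<dots> \<le> sval \<sigma> A ?Ch g" using oAh g(2) by simp
  also have "\<dots> = (\<Sum>f\<in>fst \<sigma>. \<Sum>xs\<in>tuples (fst A) (snd \<sigma> f).
        snd A f xs * (if snd B f (map g xs) > 0 \<and> snd A f (map h (map g xs)) > 0 then 1 else 0))"
    unfolding sval_def common_support_def by simp
  finally show ?thesis using that g(1) h(1) by blast
qed

definition vsym :: "nat \<Rightarrow> nat" where "vsym v = 2 * v"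
definition esym :: "nat \<times> nat \<Rightarrow> nat" where "esym e = 2 * prod_encode e + 1"
definition graph_sig :: "graph \<Rightarrow> signature" where
  "graph_sig G = (vsym ` fst G \<union> esym ` snd G, \<lambda>f. if even f then 1 else 2)"
text \<open>The structure A_w encoding G with vertex weights w: the unary symbol vsym v has weight
  w v on [v], and the binary symbol esym (u, v) has weight min (w u) (w v) on [u, v].\<close>
definition weighted_graph :: "graph \<Rightarrow> (nat \<Rightarrow> real) \<Rightarrow> vstruct" where
  "weighted_graph G w = (fst G, \<lambda>f xs. if even f then (if f div 2 \<in> fst G \<and> xs = [f div 2] then w (f div 2) else 0)
      else (if prod_decode (f div 2) \<in> snd G \<and> xs = [fst (prod_decode (f div 2)), snd (prod_decode (f div 2))]
            then min_weight w (prod_decode (f div 2)) else 0))"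

lemma even_vsym[simp]: "even (vsym v)" and odd_esym[simp]: "\<not> even (esym e)"
  unfolding vsym_def esym_def by auto

lemma vsym_eq_iff[simp]: "vsym u = vsym v \<longleftrightarrow> u = v" and esym_eq_iff[simp]: "esym a = esym b \<longleftrightarrow> a = b"
  unfolding vsym_def esym_def by auto

lemma vsym_neq_esym[simp]: "vsym v \<noteq> esym e" "esym e \<noteq> vsym v"
  unfolding vsym_def esym_def by presburger+

lemma weighted_graph_vsym: "snd (weighted_graph G w) (vsym v) xs = (if v \<in> fst G \<and> xs = [v] then w v else 0)"
  unfolding weighted_graph_def vsym_def by simp

lemma weighted_graph_esym: "snd (weighted_graph G w) (esym e) xs = (if e \<in> snd G \<and> xs = [fst e, snd e] then min_weight w e else 0)"
proof -
  have "esym e div 2 = prod_encode e" unfolding esym_def by simp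
  then show ?thesis unfolding weighted_graph_def by simp
qed

lemma graph_sig_arity: "snd (graph_sig G) (vsym v) = 1" "snd (graph_sig G) (esym e) = 2"
  unfolding graph_sig_def by auto

lemma graph_sig_cases:
  assumes "f \<in> fst (graph_sig G)"
  obtains v where "v \<in> fst G" "f = vsym v" | e where "e \<in> snd G" "f = esym e"
  using assms unfolding graph_sig_def by auto

lemma weighted_graph_other:
  assumes "f \<notin> fst (graph_sig G)"
  shows "snd (weighted_graph G w) f xs = 0"
proof (cases "even f")
  case True
  then have "f = vsym (f div 2)" unfolding vsym_def by simp
  have "f div 2 \<notin> fst G"
  proof
    assume "f div 2 \<in> fst G"
    then have "vsym (f div 2) \<in> fst (graph_sig G)" unfolding graph_sig_def by auto
    then show False using assms \<open>f = vsym (f div 2)\<close> by simp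
  qed
  then show ?thesis using True unfolding weighted_graph_def by simp
next
  case False
  then have "f = esym (prod_decode (f div 2))" unfolding esym_def by simp
  have "prod_decode (f div 2) \<notin> snd G"
  proof
    assume "prod_decode (f div 2) \<in> snd G"
    then have "esym (prod_decode (f div 2)) \<in> fst (graph_sig G)" unfolding graph_sig_def by auto
    then show False using assms \<open>f = esym (prod_decode (f div 2))\<close> by simp
  qed
  then show ?thesis using False unfolding weighted_graph_def by simp
qed

lemma is_struct_weighted_graph:
  assumes G: "is_graph G" "fst G \<noteq> {}" and w: "\<forall>v\<in>fst G. w v \<in> \<rat> \<and> w v > 0"
  shows "is_struct (graph_sig G) (weighted_graph G w)"
proof -
  have GG: "snd G \<subseteq> fst G \<times> fst G" using G unfolding is_graph_def by auto
  have c1: "finite (fst (weighted_graph G w))" "fst (weighted_graph G w) \<noteq> {}" using G unfolding is_graph_def weighted_graph_def by auto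
  have mnwQ: "min_weight w e \<in> \<rat> \<and> min_weight w e > 0" if "e \<in> snd G" for e
    using w GG that unfolding min_weight_def min_def by (cases e) auto
  have c2: "snd (weighted_graph G w) f xs \<in> \<rat> \<and> 0 \<le> snd (weighted_graph G w) f xs" for f xs
  proof (cases "f \<in> fst (graph_sig G)")
    case True
    then show ?thesis
    proof (cases rule: graph_sig_cases)
      case (1 v) then show ?thesis using w by (auto simp: weighted_graph_vsym less_imp_le)
    next
      case (2 e) then show ?thesis using mnwQ by (auto simp: weighted_graph_esym less_imp_le)
    qed
  next
    case False then show ?thesis by (simp add: weighted_graph_other)
  qed
  have c3: "f \<in> fst (graph_sig G) \<and> xs \<in> tuples (fst (weighted_graph G w)) (snd (graph_sig G) f)"
    if ne: "snd (weighted_graph G w) f xs \<noteq> 0" for f xs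
  proof -
  have fs: "f \<in> fst (graph_sig G)" using ne weighted_graph_other by blast
  have "xs \<in> tuples (fst (weighted_graph G w)) (snd (graph_sig G) f)" using fs
  proof (cases rule: graph_sig_cases)
    case (1 v) then show ?thesis using ne by (auto simp: weighted_graph_vsym graph_sig_arity tuples_def weighted_graph_def split: if_splits)
  next
    case (2 e) then show ?thesis using ne GG by (cases e) (auto simp: weighted_graph_esym graph_sig_arity tuples_def weighted_graph_def split: if_splits)
  qed
  then show ?thesis using fs by simp
  qed
  show ?thesis unfolding is_struct_def using c1 c2 c3 by blast
qed

lemma sum_weighted_graph:
  assumes G: "is_graph G"
  shows "(\<Sum>f\<in>fst (graph_sig G). \<Sum>xs\<in>tuples (fst G) (snd (graph_sig G) f). snd (weighted_graph G w) f xs * \<Phi> f xs)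
     = (\<Sum>v\<in>fst G. w v * \<Phi> (vsym v) [v]) + (\<Sum>e\<in>snd G. min_weight w e * \<Phi> (esym e) [fst e, snd e])"
proof -
  have fV: "finite (fst G)" and GG: "snd G \<subseteq> fst G \<times> fst G" using G unfolding is_graph_def by auto
  have fE: "finite (snd G)" using GG fV finite_subset by blast
  let ?F = "\<lambda>f. \<Sum>xs\<in>tuples (fst G) (snd (graph_sig G) f). snd (weighted_graph G w) f xs * \<Phi> f xs"
  have "(\<Sum>f\<in>fst (graph_sig G). ?F f) = (\<Sum>f\<in>vsym ` fst G. ?F f) + (\<Sum>f\<in>esym ` snd G. ?F f)"
    unfolding graph_sig_def fst_conv using fV fE by (intro sum.union_disjoint) auto
  also have "(\<Sum>f\<in>vsym ` fst G. ?F f) = (\<Sum>v\<in>fst G. ?F (vsym v))"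
    by (simp add: sum.reindex inj_on_def)
  also have "(\<Sum>f\<in>esym ` snd G. ?F f) = (\<Sum>e\<in>snd G. ?F (esym e))"
    by (simp add: sum.reindex inj_on_def)
  also have "(\<Sum>v\<in>fst G. ?F (vsym v)) = (\<Sum>v\<in>fst G. w v * \<Phi> (vsym v) [v])"
  proof (intro sum.cong refl)
    fix v assume v: "v \<in> fst G"
    have "?F (vsym v) = (\<Sum>xs\<in>tuples (fst G) 1. if xs = [v] then w v * \<Phi> (vsym v) xs else 0)"
      using v by (intro sum.cong) (auto simp: weighted_graph_vsym graph_sig_arity)
    also have "\<dots> = w v * \<Phi> (vsym v) [v]"
      using v finite_tuples[OF fV] by (simp add: sum.delta' tuples_def)
    finally show "?F (vsym v) = w v * \<Phi> (vsym v) [v]" .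
  qed
  also have "(\<Sum>e\<in>snd G. ?F (esym e)) = (\<Sum>e\<in>snd G. min_weight w e * \<Phi> (esym e) [fst e, snd e])"
  proof (intro sum.cong refl)
    fix e assume e: "e \<in> snd G"
    have "?F (esym e) = (\<Sum>xs\<in>tuples (fst G) 2. if xs = [fst e, snd e] then min_weight w e * \<Phi> (esym e) xs else 0)"
      using e by (intro sum.cong) (auto simp: weighted_graph_esym graph_sig_arity)
    also have "\<dots> = min_weight w e * \<Phi> (esym e) [fst e, snd e]"
      using e GG finite_tuples[OF fV] by (auto simp: sum.delta' tuples_def)
    finally show "?F (esym e) = min_weight w e * \<Phi> (esym e) [fst e, snd e]" .
  qed
  finally show ?thesis .
qed

lemma gaifman_weighted_graph:
  assumes G: "is_graph G" and w: "\<forall>v\<in>fst G. w v > 0"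
  shows "snd (gaifman (weighted_graph G w)) = snd G"
proof -
  have GG: "snd G \<subseteq> fst G \<times> fst G" and sym: "\<And>u v. (u, v) \<in> snd G \<Longrightarrow> (v, u) \<in> snd G"
    and irr: "\<And>u. (u, u) \<notin> snd G" using G unfolding is_graph_def by auto
  have mp: "min_weight w e > 0" if "e \<in> snd G" for e using w GG that unfolding min_weight_def by (cases e) auto
  have pos: "snd (weighted_graph G w) f xs > 0 \<longleftrightarrow> (\<exists>v\<in>fst G. f = vsym v \<and> xs = [v]) \<or> (\<exists>e\<in>snd G. f = esym e \<and> xs = [fst e, snd e])"
    for f xs
  proof (cases "f \<in> fst (graph_sig G)")
    case True
    then show ?thesis
    proof (cases rule: graph_sig_cases)
      case (1 v) then show ?thesis using w by (auto simp: weighted_graph_vsym)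
    next
      case (2 e) then show ?thesis using mp by (auto simp: weighted_graph_esym)
    qed
  next
    case False
    then show ?thesis by (auto simp: weighted_graph_other graph_sig_def)
  qed
  show ?thesis
  proof (intro set_eqI iffI)
    fix x assume "x \<in> snd (gaifman (weighted_graph G w))"
    then obtain u v f xs where x: "x = (u, v)" "u \<noteq> v" "snd (weighted_graph G w) f xs > 0" "u \<in> set xs" "v \<in> set xs"
      unfolding gaifman_def by auto
    then show "x \<in> snd G" using pos[of f xs] sym by (cases x) auto
  next
    fix x assume x: "x \<in> snd G"
    obtain u v where uv: "x = (u, v)" by (cases x)
    have "snd (weighted_graph G w) (esym (u, v)) [u, v] > 0" using pos x uv by auto
    moreover have "u \<noteq> v" using irr x uv by auto
    ultimately show "x \<in> snd (gaifman (weighted_graph G w))" unfolding gaifman_def uv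
      by simp (intro exI[of _ "esym (u, v)"] exI[of _ "[u, v]"], auto)
  qed
qed

lemma weighted_graph_in_A_class:
  assumes G: "G \<in> \<G>" "is_graph G" "fst G \<noteq> {}" and w: "\<forall>v\<in>fst G. w v \<in> \<rat> \<and> w v > 0" and r: "r \<ge> 2"
  shows "(graph_sig G, weighted_graph G w) \<in> A_class \<G> r"
proof -
  have "finite (fst G)" "snd G \<subseteq> fst G \<times> fst G" using G(2) unfolding is_graph_def by auto
  then have "finite (snd G)" using finite_subset by blast
  then have "is_sig (graph_sig G)" unfolding is_sig_def graph_sig_def using \<open>finite (fst G)\<close> by auto
  moreover have "is_struct (graph_sig G) (weighted_graph G w)" by (rule is_struct_weighted_graph[OF G(2,3) w])
  moreover have "graph_iso (gaifman (weighted_graph G w)) G"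
    unfolding graph_iso_def using gaifman_weighted_graph[OF G(2)] w
    by (intro exI[of _ id]) (auto simp: gaifman_def weighted_graph_def)
  moreover have "\<forall>f\<in>fst (graph_sig G). snd (graph_sig G) f \<le> r" using r unfolding graph_sig_def by auto
  ultimately show ?thesis using G(1) unfolding A_class_def by blast
qed

lemma min_weight_pos:
  assumes "is_graph G" "\<forall>v\<in>fst G. w v > 0" "e \<in> snd G"
  shows "min_weight w e > 0"
  using assms unfolding is_graph_def min_weight_def by (cases e) auto

lemma round_trip_weight_weighted_graph:
  assumes G: "is_graph G" and w: "\<forall>v\<in>fst G. w v > 0"
  shows "(\<Sum>f\<in>fst (graph_sig G). \<Sum>xs\<in>tuples (fst G) (snd (graph_sig G) f).
        snd (weighted_graph G w) f xs * (if snd B f (map g xs) > 0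
          \<and> snd (weighted_graph G w) f (map h (map g xs)) > 0 then 1 else 0))
      = (\<Sum>v\<in>{v\<in>fst G. snd B (vsym v) [g v] > 0 \<and> h (g v) = v}. w v)
      + (\<Sum>e\<in>{(a, b)\<in>snd G. snd B (esym (a, b)) [g a, g b] > 0 \<and> h (g a) = a \<and> h (g b) = b}. min_weight w e)"
    (is "_ = (\<Sum>v\<in>?K. w v) + (\<Sum>e\<in>?P. min_weight w e)")
proof -
  let ?A = "weighted_graph G w"
  have fV: "finite (fst G)" and GG: "snd G \<subseteq> fst G \<times> fst G" using G unfolding is_graph_def by auto
  have fE: "finite (snd G)" using GG fV finite_subset by blast
  have "w v * (if snd B (vsym v) (map g [v]) > 0 \<and> snd ?A (vsym v) (map h (map g [v])) > 0 then 1 else 0)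
      = (if v \<in> ?K then w v else 0)" if "v \<in> fst G" for v
    using that w by (auto simp: weighted_graph_vsym)
  moreover have "min_weight w e * (if snd B (esym e) (map g [fst e, snd e]) > 0
        \<and> snd ?A (esym e) (map h (map g [fst e, snd e])) > 0 then 1 else 0)
      = (if e \<in> ?P then min_weight w e else 0)" if "e \<in> snd G" for e
    using that min_weight_pos[OF G w] by (cases e) (auto simp: weighted_graph_esym)
  ultimately have "(\<Sum>f\<in>fst (graph_sig G). \<Sum>xs\<in>tuples (fst G) (snd (graph_sig G) f).
        snd ?A f xs * (if snd B f (map g xs) > 0 \<and> snd ?A f (map h (map g xs)) > 0 then 1 else 0))
      = (\<Sum>v\<in>fst G. if v \<in> ?K then w v else 0) + (\<Sum>e\<in>snd G. if e \<in> ?P then min_weight w e else 0)"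
    unfolding sum_weighted_graph[OF G] by simp
  also have "\<dots> = (\<Sum>v\<in>fst G \<inter> ?K. w v) + (\<Sum>e\<in>snd G \<inter> ?P. min_weight w e)"
    using fV fE by (simp add: sum.inter_restrict)
  also have "\<dots> = (\<Sum>v\<in>?K. w v) + (\<Sum>e\<in>?P. min_weight w e)"
    by (simp add: Int_absorb1 subset_iff)
  finally show ?thesis .
qed

lemma weighted_graph_retract:
  assumes G: "is_graph G" "fst G \<noteq> {}" and w: "\<forall>v\<in>fst G. w v \<in> \<rat> \<and> w v > 0"
    and B: "is_struct (graph_sig G) B" and d: "d_opt (graph_sig G) (weighted_graph G w) B \<le> ereal \<epsilon>"
  obtains g Z P where "\<forall>v\<in>fst G. g v \<in> fst B" "Z \<subseteq> fst G" "inj_on g Z" "P \<subseteq> snd G \<inter> (Z \<times> Z)"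
    "\<And>a b. (a, b) \<in> P \<Longrightarrow> (g a, g b) \<in> snd (gaifman B)"
    "(\<Sum>v\<in>fst G - Z. w v) + (\<Sum>e\<in>snd G - P. min_weight w e)
        \<le> (1 - exp (- 2 * \<epsilon>)) * ((\<Sum>v\<in>fst G. w v) + (\<Sum>e\<in>snd G. min_weight w e))"
proof -
  let ?A = "weighted_graph G w" and ?\<sigma> = "graph_sig G"
  have fV: "finite (fst G)" and GG: "snd G \<subseteq> fst G \<times> fst G" and irr: "\<And>u. (u, u) \<notin> snd G"
    using G unfolding is_graph_def by auto
  have fE: "finite (snd G)" using GG fV finite_subset by blast
  have fA: "fst ?A = fst G" unfolding weighted_graph_def by simp
  have w0: "\<forall>v\<in>fst G. w v > 0" using w by simp
  define W M where "W = (\<Sum>v\<in>fst G. w v)" and "M = (\<Sum>e\<in>snd G. min_weight w e)"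
  have total: "total_weight ?\<sigma> ?A = W + M"
    using sum_weighted_graph[OF G(1), of w "\<lambda>_ _. 1"] unfolding total_weight_def fA W_def M_def by simp
  have "W > 0" unfolding W_def using G(2) fV w by (intro sum_pos) auto
  moreover have "M \<ge> 0"
    unfolding M_def using min_weight_pos[OF G(1) w0] by (intro sum_nonneg) (auto simp: less_imp_le)
  ultimately have "total_weight ?\<sigma> ?A > 0" using total by simp
  then obtain g h where g: "\<forall>x\<in>fst ?A. g x \<in> fst B" and "\<forall>y\<in>fst B. h y \<in> fst ?A"
    and kept: "(\<Sum>f\<in>fst ?\<sigma>. \<Sum>xs\<in>tuples (fst ?A) (snd ?\<sigma> f).
        snd ?A f xs * (if snd B f (map g xs) > 0 \<and> snd ?A f (map h (map g xs)) > 0 then 1 else 0))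
     \<ge> exp (- 2 * \<epsilon>) * total_weight ?\<sigma> ?A"
    by (rule d_opt_small_imp_round_trip[OF is_struct_weighted_graph[OF G w] B d])
  define K where "K = {v\<in>fst G. snd B (vsym v) [g v] > 0 \<and> h (g v) = v}"
  define P where "P = {(a, b)\<in>snd G. snd B (esym (a, b)) [g a, g b] > 0 \<and> h (g a) = a \<and> h (g b) = b}"
  have "(\<Sum>v\<in>K. w v) + (\<Sum>e\<in>P. min_weight w e) \<ge> exp (- 2 * \<epsilon>) * (W + M)"
    using kept unfolding fA total K_def P_def round_trip_weight_weighted_graph[OF G(1) w0] .
  moreover have "K \<subseteq> fst G" "P \<subseteq> snd G" unfolding K_def P_def by auto
  moreover have "W = (\<Sum>v\<in>fst G - K. w v) + (\<Sum>v\<in>K. w v)" "M = (\<Sum>e\<in>snd G - P. min_weight w e) + (\<Sum>e\<in>P. min_weight w e)"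
    using calculation(2,3) fV fE unfolding W_def M_def by (metis sum.subset_diff)+
  ultimately have lost: "(\<Sum>v\<in>fst G - K. w v) + (\<Sum>e\<in>snd G - P. min_weight w e) \<le> (1 - exp (- 2 * \<epsilon>)) * (W + M)"
    by (simp add: algebra_simps)
  \<comment> \<open>g is injective where h \<circ> g is the identity\<close>
  define Z where "Z = {v\<in>fst G. h (g v) = v}"
  have "(\<Sum>v\<in>fst G - Z. w v) \<le> (\<Sum>v\<in>fst G - K. w v)"
    using fV w by (intro sum_mono2) (auto simp: Z_def K_def less_imp_le)
  with lost have "(\<Sum>v\<in>fst G - Z. w v) + (\<Sum>e\<in>snd G - P. min_weight w e) \<le> (1 - exp (- 2 * \<epsilon>)) * (W + M)"
    by linarith
  moreover have "inj_on g Z" unfolding Z_def by (rule inj_on_inverseI[of _ h]) auto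
  moreover have "P \<subseteq> snd G \<inter> (Z \<times> Z)" "Z \<subseteq> fst G" using GG unfolding P_def Z_def by auto
  moreover have "(g a, g b) \<in> snd (gaifman B)" if ab: "(a, b) \<in> P" for a b
  proof -
    have "a \<noteq> b" using irr ab unfolding P_def by auto
    then have "g a \<noteq> g b" using ab unfolding P_def by auto
    then show ?thesis using ab unfolding P_def gaifman_def
      by simp (intro exI[of _ "esym (a, b)"] exI[of _ "[g a, g b]"], auto)
  qed
  ultimately show ?thesis using that g unfolding W_def M_def fA by blast
qed

lemma sum_min_weight_le_if_embedding:
  fixes w :: "nat \<Rightarrow> real"
  assumes K: "finite_graph K" "treewidth K \<le> k" "\<And>u v. (u, v) \<in> snd K \<Longrightarrow> (v, u) \<in> snd K"
    and Z: "finite Z" and P: "P \<subseteq> Z \<times> Z" "\<And>u. (u, u) \<notin> P"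
    and g: "inj_on g Z" "g ` Z \<subseteq> fst K" "\<And>a b. (a, b) \<in> P \<Longrightarrow> (g a, g b) \<in> snd K"
    and w: "\<forall>v\<in>Z. w v \<ge> 0"
  shows "(\<Sum>e\<in>P. min_weight w e) \<le> 2 * real k * (\<Sum>v\<in>Z. w v)"
proof -
  define H where "H = (Z, P \<union> converse P)"
  have H: "finite_graph H" unfolding H_def finite_graph_def using Z P by auto
  have "treewidth H \<le> treewidth K"
  proof (rule treewidth_le_if_embedding[OF H K(1)])
    show "(g u, g v) \<in> snd K" if "(u, v) \<in> snd H" for u v
      using that g(3) K(3) unfolding H_def by auto
  qed (use g in \<open>auto simp: H_def\<close>)
  moreover have "\<forall>u. (u, u) \<notin> snd H" unfolding H_def using P by auto
  ultimately have "(\<Sum>e\<in>snd H. min_weight w e) \<le> 2 * real k * (\<Sum>v\<in>Z. w v)"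
    using sum_min_weight_le_treewidth[OF H] K(2) w unfolding H_def by auto
  moreover have "(\<Sum>e\<in>P. min_weight w e) \<le> (\<Sum>e\<in>snd H. min_weight w e)"
    using finite_graph_finite_edges[OF H] P w
    by (intro sum_mono2) (auto simp: H_def min_weight_def)
  ultimately show ?thesis by linarith
qed

lemma min_weight_density_le:
  fixes w :: "nat \<Rightarrow> real"
  assumes G: "is_graph G" "fst G \<noteq> {}" and w: "\<forall>v\<in>fst G. w v \<in> \<rat> \<and> w v > 0"
    and B: "is_struct (graph_sig G) B" and d: "d_opt (graph_sig G) (weighted_graph G w) B \<le> ereal (ln 2 / 2)"
    and tw: "treewidth (gaifman B) \<le> k"
  shows "(\<Sum>e\<in>snd G. min_weight w e) \<le> (4 * real k + 1) * (\<Sum>v\<in>fst G. w v)"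
proof -
  have fV: "finite (fst G)" and GG: "snd G \<subseteq> fst G \<times> fst G" and irr: "\<And>u. (u, u) \<notin> snd G"
    using G unfolding is_graph_def by auto
  have w0: "\<forall>v\<in>fst G. w v \<ge> 0" using w by (auto simp: less_imp_le)
  obtain g Z P where g: "\<forall>v\<in>fst G. g v \<in> fst B" and Z: "Z \<subseteq> fst G" and inj: "inj_on g Z"
    and P: "P \<subseteq> snd G \<inter> (Z \<times> Z)" and P_edge: "\<And>a b. (a, b) \<in> P \<Longrightarrow> (g a, g b) \<in> snd (gaifman B)"
    and lost: "(\<Sum>v\<in>fst G - Z. w v) + (\<Sum>e\<in>snd G - P. min_weight w e)
        \<le> (1 - exp (- 2 * (ln 2 / 2))) * ((\<Sum>v\<in>fst G. w v) + (\<Sum>e\<in>snd G. min_weight w e))"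
    by (rule weighted_graph_retract[OF G w B d]) blast
  define W M where "W = (\<Sum>v\<in>fst G. w v)" and "M = (\<Sum>e\<in>snd G. min_weight w e)"
  have "(\<Sum>e\<in>P. min_weight w e) \<le> 2 * real k * (\<Sum>v\<in>Z. w v)"
  proof (rule sum_min_weight_le_if_embedding[OF finite_graph_gaifman[OF B] tw gaifman_sym])
    show "finite Z" using Z fV finite_subset by blast
    show "g ` Z \<subseteq> fst (gaifman B)" using g Z unfolding gaifman_def by auto
  qed (use P irr inj P_edge Z w0 in auto)
  also have "\<dots> \<le> 2 * real k * W"
    unfolding W_def using Z fV w0 by (intro mult_left_mono sum_mono2) auto
  finally have "(\<Sum>e\<in>P. min_weight w e) \<le> 2 * real k * W" .
  moreover have "M = (\<Sum>e\<in>P. min_weight w e) + (\<Sum>e\<in>snd G - P. min_weight w e)"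
    unfolding M_def using GG fV P by (metis (no_types, lifting) add.commute finite_SigmaI finite_subset le_inf_iff sum.subset_diff)
  moreover have "(\<Sum>v\<in>fst G - Z. w v) \<ge> 0" using w0 by (intro sum_nonneg) auto
  moreover have "1 - exp (- 2 * (ln 2 / 2)) = (1 / 2 :: real)" by (simp add: exp_minus)
  note lost = lost[unfolded this]
  ultimately have "M \<le> 2 * real k * W + (W + M) / 2" using lost unfolding W_def M_def by linarith
  then show ?thesis unfolding W_def M_def by (simp add: field_simps)
qed

lemma retract_deletion_set:
  fixes w :: "nat \<Rightarrow> real"
  assumes G: "is_graph G" and K: "finite_graph K"
    and g: "\<forall>v\<in>fst G. g v \<in> fst K" "inj_on g Z" "Z \<subseteq> fst G" "P \<subseteq> snd G \<inter> (Z \<times> Z)"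
      "\<And>a b. (a, b) \<in> P \<Longrightarrow> (g a, g b) \<in> snd K"
    and w: "\<forall>v\<in>fst G. w v \<ge> 0"
  obtains X where "X \<subseteq> fst G" "treewidth (del_verts G X) \<le> treewidth K"
    "(\<Sum>v\<in>X. w v) \<le> (\<Sum>v\<in>fst G - Z. w v) + (\<Sum>e\<in>snd G - P. min_weight w e)"
proof -
  have fV: "finite (fst G)" and GG: "snd G \<subseteq> fst G \<times> fst G" using G unfolding is_graph_def by auto
  have fE: "finite (snd G)" using GG fV finite_subset by blast
  define lighter where "lighter e = (if w (fst e) \<le> w (snd e) then fst e else snd e)" for e :: "nat \<times> nat"
  have lighter: "w (lighter e) = min_weight w e" "lighter e = fst e \<or> lighter e = snd e" for e
    unfolding lighter_def min_weight_def by auto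
  have lighterV: "lighter e \<in> fst G" if "e \<in> snd G" for e using GG that lighter(2)[of e] by auto
  define X where "X = (fst G - Z) \<union> lighter ` (snd G - P)"
  have XV: "X \<subseteq> fst G" unfolding X_def using lighterV by auto
  have "(\<Sum>v\<in>(fst G - Z) \<inter> lighter ` (snd G - P). w v) \<ge> 0"
    using w XV unfolding X_def by (intro sum_nonneg) auto
  then have "(\<Sum>v\<in>X. w v) \<le> (\<Sum>v\<in>fst G - Z. w v) + (\<Sum>v\<in>lighter ` (snd G - P). w v)"
    unfolding X_def using sum_Un[of "fst G - Z" "lighter ` (snd G - P)" w] fV fE by simp
  also have "(\<Sum>v\<in>lighter ` (snd G - P). w v) \<le> (\<Sum>e\<in>snd G - P. w (lighter e))"
    using sum_image_le[of "snd G - P" w lighter] fE w lighterV by (simp add: comp_def)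
  finally have "(\<Sum>v\<in>X. w v) \<le> (\<Sum>v\<in>fst G - Z. w v) + (\<Sum>e\<in>snd G - P. min_weight w e)"
    using lighter(1) by simp
  moreover have "treewidth (del_verts G X) \<le> treewidth K"
  proof (rule treewidth_le_if_embedding[OF finite_graph_del_verts[OF is_graph_imp_finite_graph[OF G]] K])
    have sub: "fst (del_verts G X) \<subseteq> Z" unfolding del_verts_def X_def by auto
    show "inj_on g (fst (del_verts G X))" using inj_on_subset[OF g(2) sub] .
    show "g ` fst (del_verts G X) \<subseteq> fst K" using g(1) unfolding del_verts_def by auto
    show "(g u, g v) \<in> snd K" if uv: "(u, v) \<in> snd (del_verts G X)" for u v
    proof -
      have e: "(u, v) \<in> snd G" "u \<notin> X" "v \<notin> X" using uv unfolding del_verts_def by auto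
      have "(u, v) \<in> P"
      proof (rule ccontr)
        assume "(u, v) \<notin> P"
        then have "lighter (u, v) \<in> X" using e(1) unfolding X_def by auto
        then show False using e lighter(2)[of "(u, v)"] by auto
      qed
      then show ?thesis using g(5) by blast
    qed
  qed
  ultimately show ?thesis using that XV by blast
qed

lemma light_deletion_set:
  fixes w :: "nat \<Rightarrow> real"
  assumes G: "is_graph G" "fst G \<noteq> {}" and w: "\<forall>v\<in>fst G. w v \<in> \<rat> \<and> w v > 0"
    and B: "is_struct (graph_sig G) B" and d: "d_opt (graph_sig G) (weighted_graph G w) B \<le> ereal \<epsilon>"
    and dens: "(\<Sum>e\<in>snd G. min_weight w e) \<le> D * (\<Sum>v\<in>fst G. w v)"
    and small: "(1 - exp (- 2 * \<epsilon>)) * (D + 1) \<le> \<delta>" "\<epsilon> \<ge> 0"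
  obtains X where "X \<subseteq> fst G" "treewidth (del_verts G X) \<le> treewidth (gaifman B)"
    "(\<Sum>v\<in>X. w v) \<le> \<delta> * (\<Sum>v\<in>fst G. w v)"
proof -
  have w0: "\<forall>v\<in>fst G. w v \<ge> 0" using w by (auto simp: less_imp_le)
  obtain g Z P where g: "\<forall>v\<in>fst G. g v \<in> fst B" "inj_on g Z" "Z \<subseteq> fst G" "P \<subseteq> snd G \<inter> (Z \<times> Z)"
      "\<And>a b. (a, b) \<in> P \<Longrightarrow> (g a, g b) \<in> snd (gaifman B)"
    and lost: "(\<Sum>v\<in>fst G - Z. w v) + (\<Sum>e\<in>snd G - P. min_weight w e)
        \<le> (1 - exp (- 2 * \<epsilon>)) * ((\<Sum>v\<in>fst G. w v) + (\<Sum>e\<in>snd G. min_weight w e))"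
    by (rule weighted_graph_retract[OF G w B d]) blast
  have gB: "\<forall>v\<in>fst G. g v \<in> fst (gaifman B)" using g(1) unfolding gaifman_def by simp
  obtain X where X: "X \<subseteq> fst G" "treewidth (del_verts G X) \<le> treewidth (gaifman B)"
    and wX: "(\<Sum>v\<in>X. w v) \<le> (\<Sum>v\<in>fst G - Z. w v) + (\<Sum>e\<in>snd G - P. min_weight w e)"
    by (rule retract_deletion_set[OF G(1) finite_graph_gaifman[OF B] gB g(2-5) w0])
  have W: "(\<Sum>v\<in>fst G. w v) \<ge> 0" using w0 by (intro sum_nonneg) auto
  have "(\<Sum>v\<in>X. w v) \<le> (1 - exp (- 2 * \<epsilon>)) * ((\<Sum>v\<in>fst G. w v) + (\<Sum>e\<in>snd G. min_weight w e))"
    using wX lost by linarith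
  also have "\<dots> \<le> (1 - exp (- 2 * \<epsilon>)) * ((\<Sum>v\<in>fst G. w v) + D * (\<Sum>v\<in>fst G. w v))"
    using small(2) dens by (intro mult_left_mono) auto
  also have "\<dots> = ((1 - exp (- 2 * \<epsilon>)) * (D + 1)) * (\<Sum>v\<in>fst G. w v)" by (simp add: algebra_simps)
  also have "\<dots> \<le> \<delta> * (\<Sum>v\<in>fst G. w v)" using small(1) W by (rule mult_right_mono)
  finally show ?thesis using that X by blast
qed

lemma tw_pliable_A_classD:
  assumes "tw_pliable (A_class \<G> r)" "\<epsilon> > 0"
  obtains k where "\<And>\<sigma> A. (\<sigma>, A) \<in> A_class \<G> r \<Longrightarrow>
      \<exists>B. is_struct \<sigma> B \<and> treewidth (gaifman B) \<le> k \<and> d_opt \<sigma> A B \<le> ereal \<epsilon>"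
  using assms unfolding tw_pliable_def by fast

lemma pliable_imp_light_deletion_set:
  fixes w :: "nat \<Rightarrow> real"
  assumes G: "G \<in> \<G>" "is_graph G" "fst G \<noteq> {}" and r: "r \<ge> 2" and w: "\<forall>v\<in>fst G. w v \<in> \<rat> \<and> w v > 0"
    and k0: "\<And>\<sigma> A. (\<sigma>, A) \<in> A_class \<G> r \<Longrightarrow>
      \<exists>B. is_struct \<sigma> B \<and> treewidth (gaifman B) \<le> k0 \<and> d_opt \<sigma> A B \<le> ereal (ln 2 / 2)"
    and k: "\<And>\<sigma> A. (\<sigma>, A) \<in> A_class \<G> r \<Longrightarrow>
      \<exists>B. is_struct \<sigma> B \<and> treewidth (gaifman B) \<le> k \<and> d_opt \<sigma> A B \<le> ereal \<epsilon>"
    and small: "(1 - exp (- 2 * \<epsilon>)) * (4 * real k0 + 1 + 1) \<le> \<delta>" "\<epsilon> \<ge> 0"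
  shows "\<exists>X\<in>{X. X \<subseteq> fst G \<and> treewidth (del_verts G X) \<le> k}. (\<Sum>v\<in>fst G \<inter> X. w v) \<le> \<delta> * (\<Sum>v\<in>fst G. w v)"
proof -
  have A: "(graph_sig G, weighted_graph G w) \<in> A_class \<G> r" by (rule weighted_graph_in_A_class[OF G w r])
  obtain B0 where B0: "is_struct (graph_sig G) B0" "treewidth (gaifman B0) \<le> k0"
    "d_opt (graph_sig G) (weighted_graph G w) B0 \<le> ereal (ln 2 / 2)" using k0[OF A] by blast
  obtain B where B: "is_struct (graph_sig G) B" "treewidth (gaifman B) \<le> k"
    "d_opt (graph_sig G) (weighted_graph G w) B \<le> ereal \<epsilon>" using k[OF A] by blast
  have "(\<Sum>e\<in>snd G. min_weight w e) \<le> (4 * real k0 + 1) * (\<Sum>v\<in>fst G. w v)"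
    by (rule min_weight_density_le[OF G(2,3) w B0(1,3,2)])
  then obtain X where "X \<subseteq> fst G" "treewidth (del_verts G X) \<le> treewidth (gaifman B)"
    "(\<Sum>v\<in>X. w v) \<le> \<delta> * (\<Sum>v\<in>fst G. w v)"
    by (rule light_deletion_set[OF G(2,3) w B(1,3) _ small])
  then show ?thesis using B(2) by (metis (no_types, lifting) Int_absorb1 mem_Collect_eq order_trans)
qed

lemma tw_pliable_imp_frac_tw_fragile:
  fixes \<G> :: "graph set" and r :: nat
  assumes graphs: "\<forall>G\<in>\<G>. is_graph G" and r: "r \<ge> 2" and pliable: "tw_pliable (A_class \<G> r)"
  shows "frac_tw_fragile \<G>"
  unfolding frac_tw_fragile_def
proof (intro allI impI)
  fix \<epsilon> :: real assume \<epsilon>: "\<epsilon> > 0"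
  \<comment> \<open>a coarse approximation bounds the edge density, a fine one yields light deletion sets\<close>
  have "ln 2 / 2 > (0 :: real)" by simp
  then obtain k0 where k0: "\<And>\<sigma> A. (\<sigma>, A) \<in> A_class \<G> r \<Longrightarrow>
      \<exists>B. is_struct \<sigma> B \<and> treewidth (gaifman B) \<le> k0 \<and> d_opt \<sigma> A B \<le> ereal (ln 2 / 2)"
    using tw_pliable_A_classD[OF pliable] by blast
  define \<theta> where "\<theta> = min (1 / 2) (\<epsilon> / 2 / (4 * real k0 + 2))"
  have "\<theta> \<le> \<epsilon> / 2 / (4 * real k0 + 2)" unfolding \<theta>_def by simp
  then have \<theta>: "\<theta> * (4 * real k0 + 1 + 1) \<le> \<epsilon> / 2" by (simp add: le_divide_eq algebra_simps)
  define \<epsilon>' where "\<epsilon>' = - ln (1 - \<theta>) / 2"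
  have \<epsilon>': "\<epsilon>' > 0" "1 - exp (- 2 * \<epsilon>') = \<theta>" unfolding \<epsilon>'_def \<theta>_def using \<epsilon> by auto
  obtain k where k: "\<And>\<sigma> A. (\<sigma>, A) \<in> A_class \<G> r \<Longrightarrow>
      \<exists>B. is_struct \<sigma> B \<and> treewidth (gaifman B) \<le> k \<and> d_opt \<sigma> A B \<le> ereal \<epsilon>'"
    using tw_pliable_A_classD[OF pliable \<epsilon>'(1)] by blast
  have "\<exists>\<pi> :: nat set pmf. set_pmf \<pi> \<subseteq> {X. X \<subseteq> fst G \<and> treewidth (del_verts G X) \<le> k}
      \<and> (\<forall>v\<in>fst G. measure_pmf.prob \<pi> {X. v \<in> X} \<le> \<epsilon> / 2 + \<epsilon> / 2)" if G: "G \<in> \<G>" for G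
  proof (cases "fst G = {}")
    case True
    have "treewidth (del_verts G {}) \<le> k"
      using True graphs G by (intro treewidth_le_card finite_graph_del_verts is_graph_imp_finite_graph)
        (auto simp: del_verts_def)
    then show ?thesis using True by (intro exI[of _ "return_pmf {}"]) auto
  next
    case False
    have G': "is_graph G" using graphs G by blast
    then have fV: "finite (fst G)" unfolding is_graph_def by simp
    show ?thesis
    proof (rule thin_distribution_of_oracle[OF fV False])
      fix w :: "nat \<Rightarrow> real" assume w: "\<forall>v\<in>fst G. w v \<in> \<rat> \<and> 0 < w v"
      show "\<exists>X\<in>{X. X \<subseteq> fst G \<and> treewidth (del_verts G X) \<le> k}. (\<Sum>v\<in>fst G \<inter> X. w v) \<le> \<epsilon> / 2 * (\<Sum>v\<in>fst G. w v)"
        by (rule pliable_imp_light_deletion_set[OF G G' False r w k0 k]) (use \<epsilon>' \<theta> in auto)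
    qed (use \<epsilon> in auto)
  qed
  then show "\<exists>k. \<forall>G\<in>\<G>. \<exists>\<pi> :: nat set pmf. set_pmf \<pi> \<subseteq> {X. X \<subseteq> fst G \<and> treewidth (del_verts G X) \<le> k}
      \<and> (\<forall>v\<in>fst G. measure_pmf.prob \<pi> {X. v \<in> X} \<le> \<epsilon>)" by (intro exI[of _ k]) simp
qed

theorem lemma4:
  fixes \<G> :: "graph set" and r :: nat
  assumes "\<forall>G\<in>\<G>. is_graph G"
    and "r \<ge> 2"
  shows "frac_tw_fragile \<G> \<longleftrightarrow> tw_pliable (A_class \<G> r)"
  using frac_tw_fragile_imp_tw_pliable[OF assms(1)] tw_pliable_imp_frac_tw_fragile[OF assms] by blast

end
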